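(* For every element $g\in G_{mn}$ there exists an integer $t_0>1$ such that for every positive integer $t$ divisible by $t_0$, the length of $g\rho_t$ in $G_{mn}(t)$ equals the length of $g$ in $G_{mn}$.
   Context: Fix integers $m,n>1$ and let $G_{mn}=\langle a,b;\ [a^m,b^n]=1\rangle$. Put $c=a^m$, $d=b^n$, $H=\langle c,d\rangle$, $A=\langle a,H\rangle$, $B=\langle b,H\rangle$; then $G_{mn}=(A*B;\ H)$. For an integer $t>1$ let $G_{mn}(t)=\langle a,b;\ [a^m,b^n]=1,\ a^{mt}=b^{nt}=1\rangle$, $\rho_t:G_{mn}\to G_{mn}(t)$ the natural homomorphism, $H(t)=H\rho_t$, $A(t)=A\rho_t$, $B(t)=B\rho_t$; then $G_{mn}(t)=(A(t)*B(t);\ H(t))$. The length of an element is the number of components of a reduced form with respect to these amalgamated free product decompositions (a reduced form is $x_1\cdots x_r$ with each $x_i$ in one free factor and, when $r>1$, consecutive components in different factors). *)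

theory Defs
  imports "HOL-Algebra.Generated_Groups"
begin

text \<open>A letter is (generator, inverted); generator False = a, True = b.\<close>
type_synonym word = "(bool \<times> bool) list"

definition inv_letter :: "bool \<times> bool \<Rightarrow> bool \<times> bool" where
  "inv_letter x = (fst x, \<not> snd x)"

definition gen_pow :: "bool \<Rightarrow> nat \<Rightarrow> word" where
  "gen_pow g k = replicate k (g, False)"

definition gen_ipow :: "bool \<Rightarrow> nat \<Rightarrow> word" where
  "gen_ipow g k = replicate k (g, True)"

inductive word_eqv :: "word set \<Rightarrow> word \<Rightarrow> word \<Rightarrow> bool" for R where
  refl: "word_eqv R w w"
| sym: "word_eqv R u v \<Longrightarrow> word_eqv R v u"
| trans: "word_eqv R u v \<Longrightarrow> word_eqv R v w \<Longrightarrow> word_eqv R u w"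
| cancel: "word_eqv R (u @ [x, inv_letter x] @ v) (u @ v)"
| relator: "r \<in> R \<Longrightarrow> word_eqv R (u @ r @ v) (u @ v)"

definition word_cls :: "word set \<Rightarrow> word \<Rightarrow> word set" where
  "word_cls R w = {v. word_eqv R v w}"

definition pres_group :: "word set \<Rightarrow> word set monoid" where
  "pres_group R =
     \<lparr> carrier = range (word_cls R),
       mult = (\<lambda>X Y. {w. \<exists>x\<in>X. \<exists>y\<in>Y. word_eqv R w (x @ y)}),
       one = word_cls R [] \<rparr>"

text \<open>Relators: [a^m, b^n] = a^-m b^-n a^m b^n, and additionally a^(mt), b^(nt).\<close>
definition rels_G :: "nat \<Rightarrow> nat \<Rightarrow> word set" where
  "rels_G m n = {gen_ipow False m @ gen_ipow True n @ gen_pow False m @ gen_pow True n}"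

definition rels_Gt :: "nat \<Rightarrow> nat \<Rightarrow> nat \<Rightarrow> word set" where
  "rels_Gt m n t = rels_G m n \<union> {gen_pow False (m * t), gen_pow True (n * t)}"

definition G_mn :: "nat \<Rightarrow> nat \<Rightarrow> word set monoid" where
  "G_mn m n = pres_group (rels_G m n)"

definition G_mnt :: "nat \<Rightarrow> nat \<Rightarrow> nat \<Rightarrow> word set monoid" where
  "G_mnt m n t = pres_group (rels_Gt m n t)"

text \<open>Subgroups H = <c,d>, A = <a,H>, B = <b,H> of a presented group with relators R
  (c = a^m, d = b^n).\<close>
definition sub_H :: "word set \<Rightarrow> nat \<Rightarrow> nat \<Rightarrow> word set set" where
  "sub_H R m n = generate (pres_group R) {word_cls R (gen_pow False m), word_cls R (gen_pow True n)}"

definition sub_A :: "word set \<Rightarrow> nat \<Rightarrow> nat \<Rightarrow> word set set" where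
  "sub_A R m n = generate (pres_group R) ({word_cls R (gen_pow False 1)} \<union> sub_H R m n)"

definition sub_B :: "word set \<Rightarrow> nat \<Rightarrow> nat \<Rightarrow> word set set" where
  "sub_B R m n = generate (pres_group R) ({word_cls R (gen_pow True 1)} \<union> sub_H R m n)"

definition rho :: "nat \<Rightarrow> nat \<Rightarrow> nat \<Rightarrow> word set \<Rightarrow> word set" where
  "rho m n t X = {w. \<exists>x\<in>X. word_eqv (rels_Gt m n t) w x}"

definition reduced_form :: "('g, 'b) monoid_scheme \<Rightarrow> 'g set \<Rightarrow> 'g set \<Rightarrow> 'g set \<Rightarrow> 'g list \<Rightarrow> bool" where
  "reduced_form G A B H xs \<longleftrightarrow>
     xs \<noteq> [] \<and> set xs \<subseteq> A \<union> B \<and>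
     (length xs > 1 \<longrightarrow>
        (\<forall>x\<in>set xs. x \<notin> H) \<and>
        (\<forall>i. Suc i < length xs \<longrightarrow>
            \<not> (xs ! i \<in> A \<and> xs ! Suc i \<in> A) \<and> \<not> (xs ! i \<in> B \<and> xs ! Suc i \<in> B)))"

definition list_prod :: "('g, 'b) monoid_scheme \<Rightarrow> 'g list \<Rightarrow> 'g" where
  "list_prod G xs = foldr (\<lambda>x y. x \<otimes>\<^bsub>G\<^esub> y) xs \<one>\<^bsub>G\<^esub>"

text \<open>Length = number of components of a reduced form (well defined by the normal form
  theorem; we take the least, which then is the common value).\<close>
definition amal_length :: "('g, 'b) monoid_scheme \<Rightarrow> 'g set \<Rightarrow> 'g set \<Rightarrow> 'g set \<Rightarrow> 'g \<Rightarrow> nat" where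
  "amal_length G A B H g = (LEAST r. \<exists>xs. reduced_form G A B H xs \<and> length xs = r \<and> list_prod G xs = g)"

end

theory Submission
  imports Defs
begin

text \<open>Both \<open>G\<^sub>m\<^sub>n\<close> and \<open>G\<^sub>m\<^sub>n(t)\<close> have a normal form \<open>c\<^sup>i d\<^sup>j s\<^sub>1 \<cdots> s\<^sub>k\<close>, with syllables
  \<open>a\<^sup>e\<close>, \<open>b\<^sup>f\<close> (\<open>0 < e < m\<close>, \<open>0 < f < n\<close>) and powers of \<open>c\<close>, \<open>d\<close> (exponents modulo \<open>t\<close> in
  \<open>G\<^sub>m\<^sub>n(t)\<close>), obtained by letting the group act on normal forms (van der Waerden's
  trick). The length of an element is the number of maximal runs of syllables lying in the
  same factor, \<open>a\<close>, \<open>d\<close> in \<open>A\<close> and \<open>b\<close>, \<open>c\<close> in \<open>B\<close>. If \<open>t\<close> exceeds all exponents of \<open>c\<close>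
  and \<open>d\<close> occurring in the normal form of \<open>g\<close>, then reducing them modulo \<open>t\<close> yields the normal
  form of \<open>g \<rho>\<^sub>t\<close>, with the same runs.\<close>

section \<open>Presented groups\<close>

lemma word_eqv_append_left: "word_eqv R u v \<Longrightarrow> word_eqv R (x @ u) (x @ v)"
proof (induction rule: word_eqv.induct)
  case (cancel u y v) show ?case using word_eqv.cancel[of R "x @ u" y v] by simp
next
  case (relator r u v) show ?case using word_eqv.relator[OF relator, of "x @ u" v] by simp
qed (auto intro: word_eqv.intros)

lemma word_eqv_append_right: "word_eqv R u v \<Longrightarrow> word_eqv R (u @ y) (v @ y)"
proof (induction rule: word_eqv.induct)
  case (cancel u x v) show ?case using word_eqv.cancel[of R u x "v @ y"] by simp
next
  case (relator r u v) show ?case using word_eqv.relator[OF relator, of u "v @ y"] by simp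
qed (auto intro: word_eqv.intros)

lemma word_eqv_append: "word_eqv R u v \<Longrightarrow> word_eqv R x y \<Longrightarrow> word_eqv R (u @ x) (v @ y)"
  by (meson word_eqv_append_left word_eqv_append_right word_eqv.trans)

lemma word_eqv_mono: "word_eqv R u v \<Longrightarrow> R \<subseteq> R' \<Longrightarrow> word_eqv R' u v"
proof (induction rule: word_eqv.induct)
  case (cancel u x v) show ?case by (rule word_eqv.cancel)
next
  case (relator r u v) then show ?case using word_eqv.relator[of r R' u v] by auto
qed (auto intro: word_eqv.intros)

definition inv_word :: "word \<Rightarrow> word" where
  "inv_word w = rev (map inv_letter w)"

lemma inv_letter_inv_letter [simp]: "inv_letter (inv_letter x) = x"
  by (simp add: inv_letter_def)

lemma inv_word_simps [simp]:
  "inv_word [] = []" "inv_word (x # w) = inv_word w @ [inv_letter x]"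
  "inv_word (u @ v) = inv_word v @ inv_word u"
  by (auto simp: inv_word_def)

lemma inv_word_gen_pow [simp]:
  "inv_word (gen_pow g k) = gen_ipow g k" "inv_word (gen_ipow g k) = gen_pow g k"
  by (simp_all add: gen_pow_def gen_ipow_def inv_word_def inv_letter_def)

lemma word_eqv_inv_word_append: "word_eqv R (inv_word w @ w) []"
proof (induction w)
  case Nil show ?case by (simp add: word_eqv.refl)
next
  case (Cons x w)
  have "word_eqv R (inv_word w @ [inv_letter x, x] @ w) (inv_word w @ w)"
    using word_eqv.cancel[of R "inv_word w" "inv_letter x" w] by simp
  then show ?case using Cons word_eqv.trans by fastforce
qed

lemma word_cls_eq_iff: "word_cls R u = word_cls R v \<longleftrightarrow> word_eqv R u v"
proof
  assume "word_cls R u = word_cls R v"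
  moreover have "u \<in> word_cls R u" by (simp add: word_cls_def word_eqv.refl)
  ultimately show "word_eqv R u v" by (simp add: word_cls_def)
next
  assume "word_eqv R u v"
  then show "word_cls R u = word_cls R v"
    unfolding word_cls_def using word_eqv.sym word_eqv.trans by blast
qed

lemma pres_group_carrier: "carrier (pres_group R) = range (word_cls R)"
  by (simp add: pres_group_def)

lemma pres_group_one: "\<one>\<^bsub>pres_group R\<^esub> = word_cls R []"
  by (simp add: pres_group_def)

lemma pres_group_mult: "word_cls R u \<otimes>\<^bsub>pres_group R\<^esub> word_cls R v = word_cls R (u @ v)"
proof -
  have "{w. \<exists>x\<in>word_cls R u. \<exists>y\<in>word_cls R v. word_eqv R w (x @ y)} = word_cls R (u @ v)"
  proof (intro equalityI subsetI)
    fix w assume "w \<in> {w. \<exists>x\<in>word_cls R u. \<exists>y\<in>word_cls R v. word_eqv R w (x @ y)}"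
    then obtain x y where "word_eqv R x u" "word_eqv R y v" "word_eqv R w (x @ y)"
      by (auto simp: word_cls_def)
    then show "w \<in> word_cls R (u @ v)"
      unfolding word_cls_def using word_eqv_append word_eqv.trans by blast
  qed (auto simp: word_cls_def intro: word_eqv.refl)
  then show ?thesis by (simp add: pres_group_def)
qed

lemma group_pres_group: "group (pres_group R)"
proof (rule groupI)
  fix x assume "x \<in> carrier (pres_group R)"
  then obtain w where w: "x = word_cls R w" by (auto simp: pres_group_carrier)
  show "\<exists>y\<in>carrier (pres_group R). y \<otimes>\<^bsub>pres_group R\<^esub> x = \<one>\<^bsub>pres_group R\<^esub>"
    by (rule bexI[of _ "word_cls R (inv_word w)"])
       (auto simp: w pres_group_mult pres_group_one pres_group_carrier word_cls_eq_iff
                   word_eqv_inv_word_append)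
qed (auto simp: pres_group_carrier pres_group_mult pres_group_one)

lemma pres_group_inv: "inv\<^bsub>pres_group R\<^esub> (word_cls R w) = word_cls R (inv_word w)"
proof -
  interpret group "pres_group R" by (rule group_pres_group)
  show ?thesis
    by (rule inv_equality)
       (auto simp: pres_group_mult pres_group_one pres_group_carrier word_cls_eq_iff
                   word_eqv_inv_word_append)
qed

inductive_set words_over :: "word set \<Rightarrow> word set" for P where
  Nil: "[] \<in> words_over P"
| append: "p \<in> P \<Longrightarrow> w \<in> words_over P \<Longrightarrow> p @ w \<in> words_over P"

lemma words_over_append: "u \<in> words_over P \<Longrightarrow> v \<in> words_over P \<Longrightarrow> u @ v \<in> words_over P"
  by (induction rule: words_over.induct) (auto intro: words_over.intros)

lemma words_over_piece: "p \<in> P \<Longrightarrow> p \<in> words_over P"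
  using words_over.append[of p P "[]"] words_over.Nil by simp

lemma replicate_in_words_over: "[x] \<in> P \<Longrightarrow> replicate k x \<in> words_over P"
  by (induction k) (auto intro: words_over.intros dest: words_over.append[of "[x]"])

lemma inv_word_in_words_over:
  assumes "\<And>p. p \<in> P \<Longrightarrow> inv_word p \<in> words_over P" and "w \<in> words_over P"
  shows "inv_word w \<in> words_over P"
  using assms(2) by induction (auto intro: words_over.intros words_over_append assms(1))

lemma generate_subset_words_over:
  assumes "X \<subseteq> word_cls R ` words_over P" and "\<And>p. p \<in> P \<Longrightarrow> inv_word p \<in> words_over P"
  shows "generate (pres_group R) X \<subseteq> word_cls R ` words_over P"
proof
  fix x assume "x \<in> generate (pres_group R) X"
  then show "x \<in> word_cls R ` words_over P"
  proof induction
    case one show ?case by (auto simp: pres_group_one intro: words_over.Nil)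
  next
    case (incl h) then show ?case using assms(1) by auto
  next
    case (inv h)
    then obtain w where "w \<in> words_over P" "h = word_cls R w" using assms(1) by auto
    then show ?case using inv_word_in_words_over[OF assms(2)] by (auto simp: pres_group_inv)
  next
    case (eng h1 h2)
    then show ?case by (auto simp: pres_group_mult intro: words_over_append)
  qed
qed

section \<open>Normal forms\<close>

text \<open>The syllables \<open>SA e\<close>, \<open>SB f\<close>, \<open>SC i\<close>, \<open>SD j\<close> stand for
  \<open>a\<^sup>e\<close> (\<open>0 < e < m\<close>), \<open>b\<^sup>f\<close> (\<open>0 < f < n\<close>), \<open>c\<^sup>i\<close>, \<open>d\<^sup>j\<close> (\<open>i, j \<noteq> 0\<close>), and the triple
  \<open>(i, j, S)\<close> stands for \<open>c\<^sup>i d\<^sup>j S\<close>. The exponents of \<open>c\<close> and \<open>d\<close> are taken modulo \<open>N\<close>,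
  where \<open>N = 0\<close> (no reduction, as \<open>e mod 0 = e\<close>) is used for \<open>G\<^sub>m\<^sub>n\<close> and \<open>N = t\<close> for
  \<open>G\<^sub>m\<^sub>n(t)\<close>.\<close>

datatype syl = SA nat | SB nat | SC int | SD int

type_synonym nform = "int \<times> int \<times> syl list"

definition exp_mod :: "nat \<Rightarrow> int \<Rightarrow> int" where
  "exp_mod N e = e mod int N"

lemma exp_mod_idem [simp]: "exp_mod N (exp_mod N e) = exp_mod N e"
  by (simp add: exp_mod_def)

lemma exp_mod_add_mod [simp]:
  "exp_mod N (exp_mod N a + b) = exp_mod N (a + b)" "exp_mod N (b + exp_mod N a) = exp_mod N (b + a)"
  by (simp_all add: exp_mod_def mod_add_left_eq mod_add_right_eq)

lemma exp_mod_0 [simp]: "exp_mod N 0 = 0"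
  by (simp add: exp_mod_def)

lemma exp_mod_diff_mod [simp]: "exp_mod N (exp_mod N a - b) = exp_mod N (a - b)"
  by (simp add: exp_mod_def mod_diff_left_eq)

lemma exp_mod_add_mult_self [simp]:
  "exp_mod N (a + int N * q) = exp_mod N a" "exp_mod N (a + int N) = exp_mod N a"
  by (simp_all add: exp_mod_def)

fun valid_syl :: "nat \<Rightarrow> nat \<Rightarrow> nat \<Rightarrow> syl \<Rightarrow> bool" where
  "valid_syl m n N (SA e) \<longleftrightarrow> 0 < e \<and> e < m"
| "valid_syl m n N (SB f) \<longleftrightarrow> 0 < f \<and> f < n"
| "valid_syl m n N (SC i) \<longleftrightarrow> i \<noteq> 0 \<and> exp_mod N i = i"
| "valid_syl m n N (SD j) \<longleftrightarrow> j \<noteq> 0 \<and> exp_mod N j = j"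

text \<open>\<open>A\<close> is the amalgam of \<open>\<langle>a\<rangle>\<close> and \<open>\<langle>c, d\<rangle> \<cong> \<int>\<^sup>2\<close> over \<open>\<langle>c\<rangle>\<close>, so a run of syllables from
  \<open>A\<close> alternates between powers of \<open>a\<close> and of \<open>d\<close>, every power of \<open>c\<close> being pushed to the
  left; symmetrically for \<open>B\<close>. Hence powers of \<open>c\<close> and \<open>d\<close> are followed by powers of \<open>a\<close>
  or \<open>b\<close> only.\<close>

fun syl_adj :: "syl \<Rightarrow> syl \<Rightarrow> bool" where
  "syl_adj (SA _) (SD _) = True" | "syl_adj (SA _) (SB _) = True"
| "syl_adj (SD _) (SA _) = True" | "syl_adj (SD _) (SB _) = True"
| "syl_adj (SB _) (SC _) = True" | "syl_adj (SB _) (SA _) = True"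
| "syl_adj (SC _) (SB _) = True" | "syl_adj (SC _) (SA _) = True"
| "syl_adj _ _ = False"

fun lead_not_cd :: "syl list \<Rightarrow> bool" where
  "lead_not_cd (SC _ # _) = False" | "lead_not_cd (SD _ # _) = False" | "lead_not_cd _ = True"

definition valid_syls :: "nat \<Rightarrow> nat \<Rightarrow> nat \<Rightarrow> syl list \<Rightarrow> bool" where
  "valid_syls m n N S \<longleftrightarrow> (\<forall>x\<in>set S. valid_syl m n N x) \<and> successively syl_adj S"

fun valid_nf :: "nat \<Rightarrow> nat \<Rightarrow> nat \<Rightarrow> nform \<Rightarrow> bool" where
  "valid_nf m n N (i, j, S) \<longleftrightarrow>
     exp_mod N i = i \<and> exp_mod N j = j \<and> valid_syls m n N S \<and> lead_not_cd S"

lemma valid_syls_simps [simp]: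
  "valid_syls m n N []"
  "valid_syls m n N (x # S) \<longleftrightarrow> valid_syl m n N x \<and> valid_syls m n N S \<and>
     (case S of [] \<Rightarrow> True | y # _ \<Rightarrow> syl_adj x y)"
  by (auto simp: valid_syls_def split: list.split)

text \<open>\<open>peel_a p = (i, e, R)\<close> writes \<open>p\<close> as \<open>c\<^sup>i a\<^sup>e R\<close> with \<open>R\<close> not starting with an \<open>a\<close>- or
  \<open>c\<close>-syllable; left multiplication by \<open>a\<^sup>k\<close> only changes \<open>i\<close> and \<open>e\<close>, and \<open>mk_a\<close> reassembles.\<close>

fun peel_a :: "nform \<Rightarrow> int \<times> nat \<times> syl list" where
  "peel_a (i, j, S) = (if j \<noteq> 0 then (i, 0, SD j # S)
      else (case S of SA e # S' \<Rightarrow> (i, e, S') | _ \<Rightarrow> (i, 0, S)))"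

fun mk_a :: "int \<Rightarrow> nat \<Rightarrow> syl list \<Rightarrow> nform" where
  "mk_a i e R = (if e = 0 then (case R of SD j # R' \<Rightarrow> (i, j, R') | _ \<Rightarrow> (i, 0, R))
      else (i, 0, SA e # R))"

definition lmult_a :: "nat \<Rightarrow> nat \<Rightarrow> int \<Rightarrow> nform \<Rightarrow> nform" where
  "lmult_a m N k p = (case peel_a p of (i, e, R) \<Rightarrow>
      mk_a (exp_mod N (i + (k + int e) div int m)) (nat ((k + int e) mod int m)) R)"

fun lead_not_ac :: "syl list \<Rightarrow> bool" where
  "lead_not_ac (SA _ # _) = False" | "lead_not_ac (SC _ # _) = False" | "lead_not_ac _ = True"

fun valid_peeled :: "nat \<Rightarrow> nat \<Rightarrow> nat \<Rightarrow> int \<times> nat \<times> syl list \<Rightarrow> bool" where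
  "valid_peeled m n N (i, e, R) \<longleftrightarrow>
     exp_mod N i = i \<and> e < m \<and> valid_syls m n N R \<and> lead_not_ac R"

lemma lead_not_ac_after_a: "valid_syls m n N (SA e # S) \<Longrightarrow> lead_not_ac S"
  by (cases S rule: lead_not_ac.cases) auto

lemma valid_peeled_peel_a:
  assumes "0 < m" "valid_nf m n N p" shows "valid_peeled m n N (peel_a p)"
proof (cases p)
  case (fields i j S)
  show ?thesis using assms lead_not_ac_after_a[of m n N _ "tl S"]
    by (cases "j = 0"; cases S rule: lead_not_cd.cases) (auto simp: fields)
qed

lemma mk_a_peel_a:
  assumes "valid_nf m n N (i, j, S)"
  shows "(case peel_a (i, j, S) of (_, e, R) \<Rightarrow> mk_a i' e R) = (i', j, S)"
  using assms by (cases "j = 0"; cases S rule: lead_not_cd.cases) auto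

lemma fst_peel_a: "fst (peel_a (i, j, S)) = i"
  by (auto split: list.split syl.split)

lemma peel_a_mk_a: "valid_peeled m n N (i, e, R) \<Longrightarrow> peel_a (mk_a i e R) = (i, e, R)"
  by (cases "e = 0"; cases R rule: lead_not_ac.cases) auto

lemma valid_nf_mk_a: "valid_peeled m n N (i, e, R) \<Longrightarrow> valid_nf m n N (mk_a i e R)"
proof (cases R)
  case (Cons x R')
  assume v: "valid_peeled m n N (i, e, R)"
  show ?thesis
  proof (cases x)
    case (SD j) then show ?thesis using v Cons
      by (cases R' rule: lead_not_cd.cases) (auto split: list.splits)
  qed (use v Cons in \<open>auto split: list.splits\<close>)
qed auto

declare mk_a.simps [simp del] peel_a.simps [simp del]

lemma div_mod_add_shift:
  fixes k l e m :: int assumes "0 < m"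
  shows "(l + e) div m + (k + (l + e) mod m) div m = (k + l + e) div m"
    and "(k + (l + e) mod m) mod m = (k + l + e) mod m"
proof -
  have "k + l + e = m * ((l + e) div m) + (k + (l + e) mod m)"
    by (metis add.commute add.left_commute div_mult_mod_eq mult.commute)
  then show "(l + e) div m + (k + (l + e) mod m) div m = (k + l + e) div m"
    using assms by (metis add.commute div_mult_self2 less_irrefl mult.commute)
  show "(k + (l + e) mod m) mod m = (k + l + e) mod m"
    by (metis add.assoc mod_add_right_eq)
qed

lemma valid_nf_lmult_a:
  assumes "0 < m" "valid_nf m n N p" shows "valid_nf m n N (lmult_a m N k p)"
proof -
  obtain i e R where pe: "peel_a p = (i, e, R)" by (cases "peel_a p") auto
  have "valid_peeled m n N (i, e, R)" using valid_peeled_peel_a[OF assms] pe by simp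
  then have "valid_peeled m n N (exp_mod N (i + (k + int e) div int m), nat ((k + int e) mod int m), R)"
    using assms(1) by (auto simp: nat_less_iff)
  then show ?thesis unfolding lmult_a_def pe by (auto intro: valid_nf_mk_a)
qed

lemma lmult_a_lmult_a:
  assumes "0 < m" "valid_nf m n N p" shows "lmult_a m N k (lmult_a m N l p) = lmult_a m N (k + l) p"
proof -
  obtain i e R where pe: "peel_a p = (i, e, R)" by (cases "peel_a p") auto
  have pv: "valid_peeled m n N (i, e, R)" using valid_peeled_peel_a[OF assms] pe by simp
  define i1 where "i1 = exp_mod N (i + (l + int e) div int m)"
  define e1 where "e1 = nat ((l + int e) mod int m)"
  have pv1: "valid_peeled m n N (i1, e1, R)"
    using pv assms(1) by (auto simp: i1_def e1_def nat_less_iff)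
  have e1: "int e1 = (l + int e) mod int m" using assms(1) by (simp add: e1_def)
  note shift = div_mod_add_shift[where k=k and l=l and e="int e" and m="int m",
    OF of_nat_0_less_iff[THEN iffD2, OF assms(1)]]
  have "lmult_a m N k (lmult_a m N l p) =
      mk_a (exp_mod N (i1 + (k + int e1) div int m)) (nat ((k + int e1) mod int m)) R"
    by (simp add: lmult_a_def pe peel_a_mk_a[OF pv1] flip: i1_def e1_def)
  also have "\<dots> = mk_a (exp_mod N (i + (k + l + int e) div int m)) (nat ((k + l + int e) mod int m)) R"
    unfolding i1_def e1 shift(2)[symmetric] by (metis exp_mod_add_mod(1) add.assoc shift(1))
  also have "\<dots> = lmult_a m N (k + l) p" by (simp add: lmult_a_def pe add.assoc)
  finally show ?thesis .
qed

lemma lmult_a_0: "0 < m \<Longrightarrow> valid_nf m n N p \<Longrightarrow> lmult_a m N 0 p = p"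
  using mk_a_peel_a[of m n N "fst p" "fst (snd p)" "snd (snd p)" "fst p"]
    valid_peeled_peel_a[of m n N p] fst_peel_a[of "fst p" "fst (snd p)" "snd (snd p)"]
  by (cases p) (auto simp: lmult_a_def split: prod.splits)

lemma lmult_a_mult_m:
  assumes "0 < m" "valid_nf m n N (i, j, S)"
  shows "lmult_a m N (int m * q) (i, j, S) = (exp_mod N (i + q), j, S)"
proof -
  obtain e R where pe: "peel_a (i, j, S) = (i, e, R)"
    using fst_peel_a[of i j S] by (cases "peel_a (i, j, S)") auto
  have "e < m" using valid_peeled_peel_a[OF assms] pe by simp
  then have "(int m * q + int e) div int m = q" "(int m * q + int e) mod int m = int e"
    using assms(1) by auto
  then have "lmult_a m N (int m * q) (i, j, S) = mk_a (exp_mod N (i + q)) e R"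
    by (simp add: lmult_a_def pe)
  then show ?thesis using mk_a_peel_a[OF assms(2), of "exp_mod N (i + q)"] pe by simp
qed

lemma lmult_a_prepend:
  assumes "0 < e" "e < m" "j \<noteq> 0 \<or> lead_not_ac T"
  shows "lmult_a m N (int e) (0, j, T) = (0, 0, SA e # (if j = 0 then T else SD j # T))"
proof -
  have "int e div int m = 0" "nat (int e mod int m) = e" using assms by auto
  moreover have "j = 0 \<Longrightarrow> peel_a (0, 0, T) = (0, 0, T)"
    using assms(3) by (cases T rule: lead_not_ac.cases) (auto simp: peel_a.simps)
  ultimately show ?thesis
    using assms by (cases "j = 0") (auto simp: lmult_a_def peel_a.simps mk_a.simps)
qed

text \<open>Left multiplication by powers of \<open>b\<close> is obtained from that by powers of \<open>a\<close> through the
  symmetry \<open>a \<leftrightarrow> b\<close>, \<open>m \<leftrightarrow> n\<close> of the presentation.\<close>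

fun swap_syl :: "syl \<Rightarrow> syl" where
  "swap_syl (SA e) = SB e" | "swap_syl (SB e) = SA e"
| "swap_syl (SC e) = SD e" | "swap_syl (SD e) = SC e"

lemma swap_syl_swap_syl [simp]: "swap_syl (swap_syl x) = x"
  by (cases x) auto

lemma swap_syl_comp_swap_syl [simp]: "swap_syl \<circ> swap_syl = id"
  by auto

fun swap_nf :: "nform \<Rightarrow> nform" where
  "swap_nf (i, j, S) = (j, i, map swap_syl S)"

lemma swap_nf_swap_nf [simp]: "swap_nf (swap_nf p) = p"
  by (cases p) auto

lemma valid_syl_swap [simp]: "valid_syl n m N (swap_syl x) = valid_syl m n N x"
  by (cases x) auto

lemma syl_adj_swap [simp]: "syl_adj (swap_syl x) (swap_syl y) = syl_adj x y"
  by (cases x; cases y) auto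

lemma lead_not_cd_swap [simp]: "lead_not_cd (map swap_syl S) = lead_not_cd S"
  by (cases S rule: lead_not_cd.cases) auto

lemma valid_syls_swap [simp]: "valid_syls n m N (map swap_syl S) = valid_syls m n N S"
  by (induction S) (auto split: list.split)

lemma valid_nf_swap [simp]: "valid_nf n m N (swap_nf p) = valid_nf m n N p"
  by (cases p) auto

definition lmult_b :: "nat \<Rightarrow> nat \<Rightarrow> int \<Rightarrow> nform \<Rightarrow> nform" where
  "lmult_b n N k p = swap_nf (lmult_a n N k (swap_nf p))"

lemma valid_nf_lmult_b: "0 < n \<Longrightarrow> valid_nf m n N p \<Longrightarrow> valid_nf m n N (lmult_b n N k p)"
  using valid_nf_lmult_a[of n m N "swap_nf p" k] unfolding lmult_b_def
  by (metis swap_nf_swap_nf valid_nf_swap)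

lemma lmult_b_lmult_b:
  "0 < n \<Longrightarrow> valid_nf m n N p \<Longrightarrow> lmult_b n N k (lmult_b n N l p) = lmult_b n N (k + l) p"
  using lmult_a_lmult_a[of n m N "swap_nf p" k l] by (simp add: lmult_b_def)

lemma lmult_b_0: "0 < n \<Longrightarrow> valid_nf m n N p \<Longrightarrow> lmult_b n N 0 p = p"
  using lmult_a_0[of n m N "swap_nf p"] by (simp add: lmult_b_def)

lemma lmult_b_mult_n:
  "0 < n \<Longrightarrow> valid_nf m n N (i, j, S) \<Longrightarrow> lmult_b n N (int n * q) (i, j, S) = (i, exp_mod N (j + q), S)"
  using lmult_a_mult_m[of n m N j i "map swap_syl S" q] by (simp add: lmult_b_def comp_def)

fun nf_of_syls :: "syl list \<Rightarrow> nform" where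
  "nf_of_syls (SC i # S) = (i, 0, S)" | "nf_of_syls (SD j # S) = (0, j, S)" | "nf_of_syls S = (0, 0, S)"

lemma nf_of_syls_lead_not_cd: "lead_not_cd S \<Longrightarrow> nf_of_syls S = (0, 0, S)"
  by (cases S rule: lead_not_cd.cases) auto

lemma nf_of_syls_swap: "nf_of_syls (map swap_syl S) = swap_nf (nf_of_syls S)"
  by (cases S rule: nf_of_syls.cases) auto

lemma lead_not_cd_after_c_d:
  "valid_syls m n N (SC i # S) \<Longrightarrow> lead_not_cd S" "valid_syls m n N (SD j # S) \<Longrightarrow> lead_not_cd S"
  by (cases S rule: lead_not_cd.cases; simp)+

lemma valid_nf_nf_of_syls: "valid_syls m n N S \<Longrightarrow> valid_nf m n N (nf_of_syls S)"
  using lead_not_cd_after_c_d[of m n N _ "tl S"] by (cases S rule: nf_of_syls.cases) auto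

lemma nf_of_syls_lmult_a:
  assumes "valid_syls m n N (SA e # S)"
  shows "lmult_a m N (int e) (nf_of_syls S) = nf_of_syls (SA e # S)"
proof (cases S)
  case Nil
  then show ?thesis using assms lmult_a_prepend[of e m 0 "[]" N] by simp
next
  case (Cons s T)
  then show ?thesis using assms by (cases s) (auto simp: lmult_a_prepend)
qed

lemma nf_of_syls_lmult_c:
  assumes "0 < m" "valid_syls m n N (SC i # S)"
  shows "lmult_a m N (int m * i) (nf_of_syls S) = nf_of_syls (SC i # S)"
proof -
  have "nf_of_syls S = (0, 0, S)" "valid_nf m n N (0, 0, S)"
    using assms(2) lead_not_cd_after_c_d(1)[OF assms(2)] by (auto simp: nf_of_syls_lead_not_cd)
  then show ?thesis using lmult_a_mult_m[OF assms(1), of n N 0 0 S i] assms(2) by simp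
qed

lemma nf_of_syls_lmult_d:
  assumes "0 < n" "valid_syls m n N (SD j # S)"
  shows "lmult_b n N (int n * j) (nf_of_syls S) = nf_of_syls (SD j # S)"
proof -
  have "nf_of_syls S = (0, 0, S)" "valid_nf m n N (0, 0, S)"
    using assms(2) lead_not_cd_after_c_d(2)[OF assms(2)] by (auto simp: nf_of_syls_lead_not_cd)
  then show ?thesis using lmult_b_mult_n[OF assms(1), of m N 0 0 S j] assms(2) by simp
qed

lemma nf_of_syls_lmult_b:
  assumes "valid_syls m n N (SB f # S)"
  shows "lmult_b n N (int f) (nf_of_syls S) = nf_of_syls (SB f # S)"
proof -
  have "lmult_a n N (int f) (nf_of_syls (map swap_syl S)) = nf_of_syls (SA f # map swap_syl S)"
    using assms valid_syls_swap[of n m N "SB f # S"]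
    by (intro nf_of_syls_lmult_a[of n m N]) (simp del: valid_syls_simps)
  then have "lmult_a n N (int f) (swap_nf (nf_of_syls S)) = swap_nf (nf_of_syls (SB f # S))"
    using nf_of_syls_swap[of "SB f # S"] by (simp add: nf_of_syls_swap)
  then show ?thesis by (simp add: lmult_b_def)
qed

definition act_letter :: "nat \<Rightarrow> nat \<Rightarrow> nat \<Rightarrow> bool \<times> bool \<Rightarrow> nform \<Rightarrow> nform" where
  "act_letter m n N x =
     (if fst x then lmult_b n N (if snd x then -1 else 1) else lmult_a m N (if snd x then -1 else 1))"

definition act_word :: "nat \<Rightarrow> nat \<Rightarrow> nat \<Rightarrow> word \<Rightarrow> nform \<Rightarrow> nform" where
  "act_word m n N w p = foldr (act_letter m n N) w p"

lemma act_word_simps [simp]: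
  "act_word m n N [] p = p"
  "act_word m n N (x # w) p = act_letter m n N x (act_word m n N w p)"
  "act_word m n N (u @ v) p = act_word m n N u (act_word m n N v p)"
  by (simp_all add: act_word_def)

lemma valid_nf_act_word:
  "0 < m \<Longrightarrow> 0 < n \<Longrightarrow> valid_nf m n N p \<Longrightarrow> valid_nf m n N (act_word m n N w p)"
  by (induction w) (auto simp: act_letter_def intro: valid_nf_lmult_a valid_nf_lmult_b)

lemma act_word_gen_pow_a:
  assumes "0 < m" "valid_nf m n N p"
  shows "act_word m n N (gen_pow False k) p = lmult_a m N (int k) p"
    and "act_word m n N (gen_ipow False k) p = lmult_a m N (- int k) p"
  by (induction k)
     (auto simp: gen_pow_def gen_ipow_def act_letter_def lmult_a_0[OF assms] lmult_a_lmult_a[OF assms] add.commute)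

lemma act_word_gen_pow_b:
  assumes "0 < n" "valid_nf m n N p"
  shows "act_word m n N (gen_pow True k) p = lmult_b n N (int k) p"
    and "act_word m n N (gen_ipow True k) p = lmult_b n N (- int k) p"
  by (induction k)
     (auto simp: gen_pow_def gen_ipow_def act_letter_def lmult_b_0[OF assms] lmult_b_lmult_b[OF assms] add.commute)

lemma act_word_c_pow:
  assumes "0 < m" "valid_nf m n N (i, j, S)"
  shows "act_word m n N (gen_pow False (m * k)) (i, j, S) = (exp_mod N (i + int k), j, S)"
    and "act_word m n N (gen_ipow False (m * k)) (i, j, S) = (exp_mod N (i - int k), j, S)"
  using lmult_a_mult_m[OF assms, of "int k"] lmult_a_mult_m[OF assms, of "- int k"]
  by (simp_all add: act_word_gen_pow_a[OF assms])

lemma act_word_d_pow: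
  assumes "0 < n" "valid_nf m n N (i, j, S)"
  shows "act_word m n N (gen_pow True (n * k)) (i, j, S) = (i, exp_mod N (j + int k), S)"
    and "act_word m n N (gen_ipow True (n * k)) (i, j, S) = (i, exp_mod N (j - int k), S)"
  using lmult_b_mult_n[OF assms, of "int k"] lmult_b_mult_n[OF assms, of "- int k"]
  by (simp_all add: act_word_gen_pow_b[OF assms])

definition rels_N :: "nat \<Rightarrow> nat \<Rightarrow> nat \<Rightarrow> word set" where
  "rels_N m n N = (if N = 0 then rels_G m n else rels_Gt m n N)"

lemma act_word_relator:
  assumes "0 < m" "0 < n" "r \<in> rels_N m n N" "valid_nf m n N p"
  shows "act_word m n N r p = p"
proof -
  obtain i j S where p: "p = (i, j, S)" by (cases p)
  note c_pow = act_word_c_pow[OF assms(1), where k = 1, simplified]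
    act_word_c_pow[OF assms(1), where k = N]
  note d_pow = act_word_d_pow[OF assms(2), where k = 1, simplified]
    act_word_d_pow[OF assms(2), where k = N]
  from assms(3) consider "r = gen_ipow False m @ gen_ipow True n @ gen_pow False m @ gen_pow True n"
    | "N \<noteq> 0" "r = gen_pow False (m * N)" | "N \<noteq> 0" "r = gen_pow True (n * N)"
    by (auto simp: rels_N_def rels_Gt_def rels_G_def split: if_splits)
  then show ?thesis
    using assms(4) by cases (simp_all add: p c_pow d_pow)
qed

lemma act_letter_cancel:
  assumes "0 < m" "0 < n" "valid_nf m n N p"
  shows "act_letter m n N x (act_letter m n N (inv_letter x) p) = p"
  using lmult_a_lmult_a[OF assms(1,3)] lmult_b_lmult_b[OF assms(2,3)]
    lmult_a_0[OF assms(1,3)] lmult_b_0[OF assms(2,3)]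
  by (auto simp: act_letter_def inv_letter_def)

lemma act_word_eqv:
  assumes "0 < m" "0 < n" "word_eqv (rels_N m n N) u v" "valid_nf m n N p"
  shows "act_word m n N u p = act_word m n N v p"
  using assms(3,4)
proof (induction arbitrary: p rule: word_eqv.induct)
  case (cancel u x v)
  then show ?case using act_letter_cancel[OF assms(1,2) valid_nf_act_word[OF assms(1,2)]] by simp
next
  case (relator r u v)
  then show ?case using act_word_relator[OF assms(1,2) relator(1) valid_nf_act_word[OF assms(1,2)]]
    by simp
qed auto

context group
begin

lemma int_pow_commutes:
  assumes x: "x \<in> carrier G" and y: "y \<in> carrier G" and xy: "x \<otimes> y = y \<otimes> x"
  shows "x [^] (i::int) \<otimes> y = y \<otimes> x [^] i"
proof (cases "i < 0")
  case True
  then obtain k where k: "i = - int k" by (metis less_le neg_int_cases)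
  have "inv x \<otimes> y = inv x \<otimes> (y \<otimes> x) \<otimes> inv x" using x y by (simp add: m_assoc)
  also have "\<dots> = inv x \<otimes> (x \<otimes> y) \<otimes> inv x" by (simp add: xy)
  also have "\<dots> = y \<otimes> inv x" using x y by (simp add: m_assoc[symmetric])
  finally have "inv x \<otimes> y = y \<otimes> inv x" .
  moreover have "x [^] i = inv x [^] k" using x k by (simp add: int_pow_neg_int nat_pow_inv)
  ultimately show ?thesis using group_commutes_pow[of "inv x" y k] x y by simp
next
  case False
  then obtain k where "i = int k" by (metis nonneg_int_cases not_less)
  then show ?thesis using group_commutes_pow[OF xy x y] by (simp add: int_pow_int)
qed

lemma int_pow_commute:
  assumes "x \<in> carrier G" "y \<in> carrier G" "x \<otimes> y = y \<otimes> x"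
  shows "x [^] (i::int) \<otimes> y [^] (j::int) = y [^] j \<otimes> x [^] i"
  using int_pow_commutes[OF assms(2,1) assms(3)[symmetric], of j]
    int_pow_commutes[OF assms(1), of "y [^] j" i] assms
  by simp

fun eval_syl :: "'a \<Rightarrow> 'a \<Rightarrow> nat \<Rightarrow> nat \<Rightarrow> syl \<Rightarrow> 'a" where
  "eval_syl g1 g2 M1 M2 (SA e) = g1 [^] (int e)"
| "eval_syl g1 g2 M1 M2 (SB e) = g2 [^] (int e)"
| "eval_syl g1 g2 M1 M2 (SC e) = g1 [^] (int M1 * e)"
| "eval_syl g1 g2 M1 M2 (SD e) = g2 [^] (int M2 * e)"

definition eval_syls :: "'a \<Rightarrow> 'a \<Rightarrow> nat \<Rightarrow> nat \<Rightarrow> syl list \<Rightarrow> 'a" where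
  "eval_syls g1 g2 M1 M2 S = foldr (\<lambda>s acc. eval_syl g1 g2 M1 M2 s \<otimes> acc) S \<one>"

fun eval_nf :: "'a \<Rightarrow> 'a \<Rightarrow> nat \<Rightarrow> nat \<Rightarrow> nform \<Rightarrow> 'a" where
  "eval_nf g1 g2 M1 M2 (i, j, S) =
     g1 [^] (int M1 * i) \<otimes> (g2 [^] (int M2 * j) \<otimes> eval_syls g1 g2 M1 M2 S)"

lemma eval_syls_simps [simp]:
  "eval_syls g1 g2 M1 M2 [] = \<one>"
  "eval_syls g1 g2 M1 M2 (s # S) = eval_syl g1 g2 M1 M2 s \<otimes> eval_syls g1 g2 M1 M2 S"
  by (simp_all add: eval_syls_def)

lemma eval_syl_closed [simp]:
  "g1 \<in> carrier G \<Longrightarrow> g2 \<in> carrier G \<Longrightarrow> eval_syl g1 g2 M1 M2 s \<in> carrier G"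
  by (cases s) auto

lemma eval_syls_closed [simp]:
  "g1 \<in> carrier G \<Longrightarrow> g2 \<in> carrier G \<Longrightarrow> eval_syls g1 g2 M1 M2 S \<in> carrier G"
  by (induction S) auto

lemma eval_nf_closed [simp]:
  "g1 \<in> carrier G \<Longrightarrow> g2 \<in> carrier G \<Longrightarrow> eval_nf g1 g2 M1 M2 p \<in> carrier G"
  by (cases p) auto

lemma eval_syls_in_subgroup:
  "subgroup K G \<Longrightarrow> (\<And>s. s \<in> set S \<Longrightarrow> eval_syl g1 g2 M1 M2 s \<in> K) \<Longrightarrow>
   eval_syls g1 g2 M1 M2 S \<in> K"
  by (induction S) (auto intro: subgroup.one_closed subgroup.m_closed)

lemma eval_syls_append:
  "g1 \<in> carrier G \<Longrightarrow> g2 \<in> carrier G \<Longrightarrow>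
   eval_syls g1 g2 M1 M2 (S @ T) = eval_syls g1 g2 M1 M2 S \<otimes> eval_syls g1 g2 M1 M2 T"
  by (induction S) (auto simp: m_assoc)

lemma eval_syls_swap: "eval_syls g1 g2 M1 M2 (map swap_syl S) = eval_syls g2 g1 M2 M1 S"
proof -
  have "eval_syl g1 g2 M1 M2 (swap_syl s) = eval_syl g2 g1 M2 M1 s" for s
    by (cases s) auto
  then show ?thesis by (induction S) auto
qed

lemma eval_nf_swap:
  assumes "g1 \<in> carrier G" "g2 \<in> carrier G"
    and "g1 [^] (int M1) \<otimes> g2 [^] (int M2) = g2 [^] (int M2) \<otimes> g1 [^] (int M1)"
  shows "eval_nf g1 g2 M1 M2 (swap_nf p) = eval_nf g2 g1 M2 M1 p"
proof -
  obtain i j S where p: "p = (i, j, S)" by (cases p)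
  have "g1 [^] (int M1 * j) \<otimes> g2 [^] (int M2 * i) = g2 [^] (int M2 * i) \<otimes> g1 [^] (int M1 * j)"
    using int_pow_commute[of "g1 [^] (int M1)" "g2 [^] (int M2)" j i] assms
    by (simp add: int_pow_pow)
  then show ?thesis using assms by (simp add: p eval_syls_swap m_assoc[symmetric])
qed

lemma eval_nf_peel_a:
  assumes "g1 \<in> carrier G" "g2 \<in> carrier G" "peel_a p = (i, e, R)"
  shows "eval_nf g1 g2 M1 M2 p = g1 [^] (int M1 * i + int e) \<otimes> eval_syls g1 g2 M1 M2 R"
proof -
  obtain i0 j S where p: "p = (i0, j, S)" by (cases p)
  show ?thesis
    using assms
    by (cases "j = 0"; cases S rule: lead_not_ac.cases)
       (auto simp: p peel_a.simps int_pow_mult m_assoc)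
qed

lemma eval_nf_mk_a:
  assumes "g1 \<in> carrier G" "g2 \<in> carrier G"
  shows "eval_nf g1 g2 M1 M2 (mk_a i e R) = g1 [^] (int M1 * i + int e) \<otimes> eval_syls g1 g2 M1 M2 R"
  using assms
  by (cases "e = 0"; cases R rule: lead_not_cd.cases) (auto simp: mk_a.simps int_pow_mult m_assoc)

lemma int_pow_exp_mod:
  assumes "g \<in> carrier G" "g [^] (int M * int N) = \<one>"
  shows "g [^] (int M * exp_mod N x) = g [^] (int M * x)"
proof -
  have "x = int N * (x div int N) + exp_mod N x" by (simp add: exp_mod_def)
  then have "int M * x = (int M * int N) * (x div int N) + int M * exp_mod N x"
    by (metis distrib_left mult.assoc)
  then have "g [^] (int M * x) = (g [^] (int M * int N)) [^] (x div int N) \<otimes> g [^] (int M * exp_mod N x)"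
    using assms(1) by (simp add: int_pow_mult int_pow_pow)
  then show ?thesis using assms by simp
qed

lemma eval_nf_lmult_a:
  assumes g: "g1 \<in> carrier G" "g2 \<in> carrier G" and N: "g1 [^] (int M1 * int N) = \<one>"
    and "0 < M1"
  shows "eval_nf g1 g2 M1 M2 (lmult_a M1 N k p) = g1 [^] k \<otimes> eval_nf g1 g2 M1 M2 p"
proof -
  obtain i e R where pe: "peel_a p = (i, e, R)" by (cases "peel_a p")
  define q where "q = (k + int e) div int M1"
  define r where "r = (k + int e) mod int M1"
  have "r \<ge> 0" using \<open>0 < M1\<close> by (simp add: r_def)
  then have "eval_nf g1 g2 M1 M2 (lmult_a M1 N k p) =
      g1 [^] (int M1 * exp_mod N (i + q) + r) \<otimes> eval_syls g1 g2 M1 M2 R"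
    using eval_nf_mk_a[OF g] by (simp add: lmult_a_def pe flip: q_def r_def)
  also have "g1 [^] (int M1 * exp_mod N (i + q) + r) = g1 [^] (int M1 * (i + q) + r)"
    using int_pow_exp_mod[OF g(1) N] g by (simp add: int_pow_mult)
  also have "int M1 * (i + q) + r = k + (int M1 * i + int e)"
    by (simp add: q_def r_def algebra_simps)
  also have "g1 [^] (k + (int M1 * i + int e)) \<otimes> eval_syls g1 g2 M1 M2 R =
      g1 [^] k \<otimes> eval_nf g1 g2 M1 M2 p"
    using eval_nf_peel_a[OF g pe] g by (simp add: int_pow_mult m_assoc)
  finally show ?thesis .
qed

lemma eval_nf_lmult_b:
  assumes g: "g1 \<in> carrier G" "g2 \<in> carrier G" and N: "g2 [^] (int M2 * int N) = \<one>"
    and "0 < M2"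
    and c: "g1 [^] (int M1) \<otimes> g2 [^] (int M2) = g2 [^] (int M2) \<otimes> g1 [^] (int M1)"
  shows "eval_nf g1 g2 M1 M2 (lmult_b M2 N k p) = g2 [^] k \<otimes> eval_nf g1 g2 M1 M2 p"
proof -
  have "eval_nf g1 g2 M1 M2 (lmult_b M2 N k p) = eval_nf g2 g1 M2 M1 (lmult_a M2 N k (swap_nf p))"
    unfolding lmult_b_def using eval_nf_swap[OF g c] by simp
  also have "\<dots> = g2 [^] k \<otimes> eval_nf g2 g1 M2 M1 (swap_nf p)"
    using eval_nf_lmult_a[OF g(2,1) N \<open>0 < M2\<close>] .
  also have "eval_nf g2 g1 M2 M1 (swap_nf p) = eval_nf g1 g2 M1 M2 p"
    using eval_nf_swap[OF g(2,1) c[symmetric], of "p"] by simp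
  finally show ?thesis .
qed

end

section \<open>The normal form theorem\<close>

locale mn_presentation =
  fixes m n N :: nat
  assumes m_pos: "0 < m" and n_pos: "0 < n"
begin

abbreviation Rels :: "word set" where "Rels \<equiv> rels_N m n N"
abbreviation Gr :: "word set monoid" where "Gr \<equiv> pres_group Rels"
abbreviation cls :: "word \<Rightarrow> word set" where "cls \<equiv> word_cls Rels"

sublocale grp: group Gr
  by (rule group_pres_group)

definition ga :: "word set" where "ga = cls [(False, False)]"
definition gb :: "word set" where "gb = cls [(True, False)]"

lemma cls_carrier [simp]: "cls w \<in> carrier Gr"
  by (simp add: pres_group_carrier)

lemma ga_carrier [simp]: "ga \<in> carrier Gr" and gb_carrier [simp]: "gb \<in> carrier Gr"
  by (simp_all add: ga_def gb_def)

lemma carrier_cls: "x \<in> carrier Gr \<Longrightarrow> (\<And>w. x = cls w \<Longrightarrow> thesis) \<Longrightarrow> thesis"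
  by (auto simp: pres_group_carrier)

lemma cls_letter_pow: "cls [x] [^]\<^bsub>Gr\<^esub> (k::nat) = cls (replicate k x)"
  by (induction k) (simp_all add: pres_group_one pres_group_mult replicate_append_same[symmetric]
                         del: replicate_append_same)

lemma cls_letter_int_pow:
  "cls [(g, False)] [^]\<^bsub>Gr\<^esub> (k::int) =
     cls (if k < 0 then gen_ipow g (nat (- k)) else gen_pow g (nat k))"
proof (cases "k < 0")
  case True
  then have "cls [(g, False)] [^]\<^bsub>Gr\<^esub> k = inv\<^bsub>Gr\<^esub> (cls [(g, False)] [^]\<^bsub>Gr\<^esub> nat (- k))"
    by (metis grp.int_pow_neg_int cls_carrier nat_0_le neg_0_le_iff_le less_le minus_minus)
  with True show ?thesis
    by (simp add: cls_letter_pow pres_group_inv gen_pow_def gen_ipow_def inv_word_def inv_letter_def)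
next
  case False
  then show ?thesis by (metis cls_letter_pow gen_pow_def int_pow_int nat_0_le not_less)
qed

lemma cls_relator: "r \<in> Rels \<Longrightarrow> cls r = \<one>\<^bsub>Gr\<^esub>"
  using word_eqv.relator[of r Rels "[]" "[]"] by (simp add: word_cls_eq_iff pres_group_one)

lemma ga_pow_mN: "ga [^]\<^bsub>Gr\<^esub> (int m * int N) = \<one>\<^bsub>Gr\<^esub>"
proof (cases "N = 0")
  case False
  then have "gen_pow False (m * N) \<in> Rels" by (simp add: rels_N_def rels_Gt_def)
  then show ?thesis by (simp add: ga_def cls_letter_int_pow cls_relator flip: of_nat_mult)
qed simp

lemma gb_pow_nN: "gb [^]\<^bsub>Gr\<^esub> (int n * int N) = \<one>\<^bsub>Gr\<^esub>"
proof (cases "N = 0")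
  case False
  then have "gen_pow True (n * N) \<in> Rels" by (simp add: rels_N_def rels_Gt_def)
  then show ?thesis by (simp add: gb_def cls_letter_int_pow cls_relator flip: of_nat_mult)
qed simp

lemma c_d_commute:
  "ga [^]\<^bsub>Gr\<^esub> (int m) \<otimes>\<^bsub>Gr\<^esub> gb [^]\<^bsub>Gr\<^esub> (int n) = gb [^]\<^bsub>Gr\<^esub> (int n) \<otimes>\<^bsub>Gr\<^esub> ga [^]\<^bsub>Gr\<^esub> (int m)"
proof -
  define c d where "c = ga [^]\<^bsub>Gr\<^esub> (int m)" and "d = gb [^]\<^bsub>Gr\<^esub> (int n)"
  have cd: "c \<in> carrier Gr" "d \<in> carrier Gr" by (simp_all add: c_def d_def)
  have "cls (gen_ipow False m @ gen_ipow True n @ gen_pow False m @ gen_pow True n) = \<one>\<^bsub>Gr\<^esub>"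
    by (rule cls_relator) (simp add: rels_N_def rels_Gt_def rels_G_def)
  then have "inv\<^bsub>Gr\<^esub> c \<otimes>\<^bsub>Gr\<^esub> (inv\<^bsub>Gr\<^esub> d \<otimes>\<^bsub>Gr\<^esub> (c \<otimes>\<^bsub>Gr\<^esub> d)) = \<one>\<^bsub>Gr\<^esub>"
    by (simp add: c_def d_def ga_def gb_def cls_letter_int_pow pres_group_inv pres_group_mult)
  then have "inv\<^bsub>Gr\<^esub> (d \<otimes>\<^bsub>Gr\<^esub> c) \<otimes>\<^bsub>Gr\<^esub> (c \<otimes>\<^bsub>Gr\<^esub> d) = \<one>\<^bsub>Gr\<^esub>"
    using cd by (simp add: grp.inv_mult_group grp.m_assoc)
  then show ?thesis
    using cd unfolding c_def d_def
    by (metis grp.inv_closed grp.inv_inv grp.inv_equality grp.m_closed)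
qed

definition act_elem :: "word set \<Rightarrow> nform \<Rightarrow> nform" where
  "act_elem x p = act_word m n N (SOME w. x = cls w) p"

lemma act_elem_cls: "valid_nf m n N p \<Longrightarrow> act_elem (cls w) p = act_word m n N w p"
  unfolding act_elem_def
  by (rule act_word_eqv[OF m_pos n_pos])
     (metis (mono_tags) someI word_cls_eq_iff word_eqv.sym)

lemma valid_nf_act_elem: "x \<in> carrier Gr \<Longrightarrow> valid_nf m n N p \<Longrightarrow> valid_nf m n N (act_elem x p)"
  by (metis carrier_cls act_elem_cls valid_nf_act_word[OF m_pos n_pos])

lemma act_elem_mult:
  "x \<in> carrier Gr \<Longrightarrow> y \<in> carrier Gr \<Longrightarrow> valid_nf m n N p \<Longrightarrow>
   act_elem (x \<otimes>\<^bsub>Gr\<^esub> y) p = act_elem x (act_elem y p)"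
  by (elim carrier_cls)
     (simp add: pres_group_mult act_elem_cls valid_nf_act_word[OF m_pos n_pos])

lemma act_elem_one: "valid_nf m n N p \<Longrightarrow> act_elem \<one>\<^bsub>Gr\<^esub> p = p"
  by (simp add: pres_group_one act_elem_cls)

lemma act_elem_ga_pow: "valid_nf m n N p \<Longrightarrow> act_elem (ga [^]\<^bsub>Gr\<^esub> (k::int)) p = lmult_a m N k p"
  by (simp add: ga_def cls_letter_int_pow act_elem_cls act_word_gen_pow_a[OF m_pos])

lemma act_elem_gb_pow: "valid_nf m n N p \<Longrightarrow> act_elem (gb [^]\<^bsub>Gr\<^esub> (k::int)) p = lmult_b n N k p"
  by (simp add: gb_def cls_letter_int_pow act_elem_cls act_word_gen_pow_b[OF n_pos])

abbreviation eval :: "nform \<Rightarrow> word set" where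
  "eval p \<equiv> grp.eval_nf ga gb m n p"

definition normal_form :: "word set \<Rightarrow> nform" where
  "normal_form x = act_elem x (0, 0, [])"

lemma valid_normal_form: "x \<in> carrier Gr \<Longrightarrow> valid_nf m n N (normal_form x)"
  by (simp add: normal_form_def valid_nf_act_elem)

lemma normal_form_mult:
  "x \<in> carrier Gr \<Longrightarrow> y \<in> carrier Gr \<Longrightarrow> normal_form (x \<otimes>\<^bsub>Gr\<^esub> y) = act_elem x (normal_form y)"
  by (simp add: normal_form_def act_elem_mult)

lemma normal_form_cls: "normal_form (cls w) = act_word m n N w (0, 0, [])"
  by (simp add: normal_form_def act_elem_cls)

lemma eval_act_letter:
  assumes "valid_nf m n N p"
  shows "eval (act_letter m n N x p) = cls [x] \<otimes>\<^bsub>Gr\<^esub> eval p"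
proof -
  have "eval (lmult_a m N k p) = ga [^]\<^bsub>Gr\<^esub> k \<otimes>\<^bsub>Gr\<^esub> eval p" for k
    by (rule grp.eval_nf_lmult_a[OF ga_carrier gb_carrier ga_pow_mN m_pos])
  moreover have "eval (lmult_b n N k p) = gb [^]\<^bsub>Gr\<^esub> k \<otimes>\<^bsub>Gr\<^esub> eval p" for k
    by (rule grp.eval_nf_lmult_b[OF ga_carrier gb_carrier gb_pow_nN n_pos c_d_commute])
  ultimately show ?thesis
    by (cases x) (auto simp: act_letter_def ga_def gb_def cls_letter_int_pow gen_pow_def
                             gen_ipow_def)
qed

lemma eval_normal_form: "x \<in> carrier Gr \<Longrightarrow> eval (normal_form x) = x"
proof (elim carrier_cls)
  fix w assume "x = cls w"
  have "eval (act_word m n N w (0, 0, [])) = cls w"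
  proof (induction w)
    case Nil show ?case by (simp add: pres_group_one)
  next
    case (Cons x w)
    have "valid_nf m n N (act_word m n N w (0, 0, []))"
      by (simp add: valid_nf_act_word[OF m_pos n_pos])
    then show ?case using Cons by (simp add: eval_act_letter pres_group_mult)
  qed
  then show "eval (normal_form x) = x" using \<open>x = cls w\<close> by (simp add: normal_form_cls)
qed

lemma act_elem_eval_syls:
  "valid_syls m n N S \<Longrightarrow> act_elem (grp.eval_syls ga gb m n S) (0, 0, []) = nf_of_syls S"
proof (induction S)
  case Nil show ?case by (simp add: act_elem_one)
next
  case (Cons s S)
  then have IH: "act_elem (grp.eval_syls ga gb m n S) (0, 0, []) = nf_of_syls S"
    and v: "valid_nf m n N (nf_of_syls S)"
    by (simp_all add: valid_nf_nf_of_syls)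
  have "act_elem (grp.eval_syl ga gb m n s) (nf_of_syls S) = nf_of_syls (s # S)"
    using Cons.prems v
    by (cases s) (simp_all add: act_elem_ga_pow act_elem_gb_pow nf_of_syls_lmult_a[of m n N]
                    nf_of_syls_lmult_b[of m n N] nf_of_syls_lmult_c[OF m_pos, of n N]
                    nf_of_syls_lmult_d[OF n_pos, of m N] del: valid_syls_simps nf_of_syls.simps)
  then show ?case using IH by (simp add: act_elem_mult act_elem_one)
qed

lemma normal_form_eval: "valid_nf m n N p \<Longrightarrow> normal_form (eval p) = p"
proof (cases p)
  case (fields i j S)
  assume v: "valid_nf m n N p"
  then have S: "valid_syls m n N S" "act_elem (grp.eval_syls ga gb m n S) (0, 0, []) = (0, 0, S)"
    using act_elem_eval_syls[of S] nf_of_syls_lead_not_cd[of S] by (auto simp: fields)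
  have v0: "valid_nf m n N (0, 0, S)" and vj: "valid_nf m n N (0, j, S)"
    using v by (simp_all add: fields)
  have "normal_form (eval p) = lmult_a m N (int m * i) (lmult_b n N (int n * j) (0, 0, S))"
    using S v0 by (simp add: fields normal_form_def act_elem_mult valid_nf_act_elem
                             act_elem_ga_pow act_elem_gb_pow valid_nf_lmult_b[OF n_pos])
  also have "\<dots> = p"
    using v lmult_b_mult_n[OF n_pos v0, of j] lmult_a_mult_m[OF m_pos vj, of i] by (simp add: fields)
  finally show ?thesis .
qed

end

text \<open>Since \<open>d = b\<^sup>n\<close> lies in \<open>A\<close> and \<open>c = a\<^sup>m\<close> in \<open>B\<close>, the syllables belonging to \<open>A\<close> are
  \<open>SA\<close> and \<open>SD\<close>.\<close>

fun a_side :: "syl \<Rightarrow> bool" where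
  "a_side (SA _) = True" | "a_side (SD _) = True" | "a_side _ = False"

definition all_a_side :: "syl list \<Rightarrow> bool" where
  "all_a_side S \<longleftrightarrow> (\<forall>s\<in>set S. a_side s)"

definition all_b_side :: "syl list \<Rightarrow> bool" where
  "all_b_side S \<longleftrightarrow> (\<forall>s\<in>set S. \<not> a_side s)"

definition hd_not_a_side :: "syl list \<Rightarrow> bool" where
  "hd_not_a_side S \<longleftrightarrow> (case S of [] \<Rightarrow> True | s # _ \<Rightarrow> \<not> a_side s)"

fun syls_of :: "nform \<Rightarrow> syl list" where
  "syls_of (i, j, S) = S"

fun append_syls :: "nform \<Rightarrow> syl list \<Rightarrow> nform" where
  "append_syls (i, j, S) T = (i, j, S @ T)"

lemma a_side_swap [simp]: "a_side (swap_syl s) \<longleftrightarrow> \<not> a_side s"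
  by (cases s) auto

lemma all_a_side_swap [simp]: "all_a_side (map swap_syl S) = all_b_side S"
  by (simp add: all_a_side_def all_b_side_def)

lemma all_b_side_swap [simp]: "all_b_side (map swap_syl S) = all_a_side S"
  by (simp add: all_a_side_def all_b_side_def)

lemma lead_not_cd_append: "S \<noteq> [] \<Longrightarrow> lead_not_cd (S @ T) = lead_not_cd S"
  by (cases S rule: lead_not_cd.cases) auto

lemma valid_nf_append_prefix:
  assumes "valid_nf m n N (i, j, S @ T)" shows "valid_nf m n N (i, j, S)"
proof -
  have "valid_syls m n N S" using assms by (auto simp: valid_syls_def successively_append_iff)
  moreover have "lead_not_cd S" using assms lead_not_cd_append[of S T] by (cases "S = []") auto
  ultimately show ?thesis using assms by simp
qed

lemma peel_a_append_syls:
  assumes "valid_nf m n N (i, j, S @ T)" "all_a_side S" "hd_not_a_side T"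
    and "peel_a (i, j, S) = (i', e, R)"
  shows "peel_a (i, j, S @ T) = (i', e, R @ T) \<and> all_a_side R"
proof (cases "j = 0")
  case False
  then show ?thesis using assms by (auto simp: peel_a.simps all_a_side_def)
next
  case True
  show ?thesis
  proof (cases S)
    case Nil
    then show ?thesis using assms True
      by (cases T rule: lead_not_ac.cases) (auto simp: peel_a.simps all_a_side_def hd_not_a_side_def)
  next
    case (Cons s S')
    then show ?thesis using assms True by (cases s) (auto simp: peel_a.simps all_a_side_def)
  qed
qed

lemma mk_a_append_syls:
  assumes "all_a_side R" "lead_not_ac R" "hd_not_a_side T"
  shows "mk_a i e (R @ T) = append_syls (mk_a i e R) T \<and> all_a_side (syls_of (mk_a i e R))"
  using assms
  by (cases R rule: lead_not_ac.cases)
     (auto simp: mk_a.simps all_a_side_def hd_not_a_side_def split: list.splits syl.splits)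

lemma lmult_a_append_syls:
  assumes "0 < m" "valid_nf m n N (i, j, S @ T)" "all_a_side S" "hd_not_a_side T"
  shows "lmult_a m N k (i, j, S @ T) = append_syls (lmult_a m N k (i, j, S)) T \<and>
         all_a_side (syls_of (lmult_a m N k (i, j, S)))"
proof -
  obtain i' e R where pe: "peel_a (i, j, S) = (i', e, R)" by (cases "peel_a (i, j, S)")
  have "lead_not_ac R"
    using valid_peeled_peel_a[OF assms(1) valid_nf_append_prefix[OF assms(2)]] pe by simp
  then show ?thesis
    using peel_a_append_syls[OF assms(2-4) pe] mk_a_append_syls[OF _ _ assms(4)]
    by (simp add: lmult_a_def pe)
qed

lemma lmult_b_append_syls:
  assumes "0 < n" "valid_nf m n N (i, j, S @ T)" "all_b_side S" "hd_not_a_side (map swap_syl T)"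
  shows "lmult_b n N k (i, j, S @ T) = append_syls (lmult_b n N k (i, j, S)) T \<and>
         all_b_side (syls_of (lmult_b n N k (i, j, S)))"
proof -
  have "swap_nf (append_syls q (map swap_syl T)) = append_syls (swap_nf q) T"
    and "syls_of (swap_nf q) = map swap_syl (syls_of q)" for q
    by (cases q; simp)+
  moreover have "valid_nf n m N (j, i, map swap_syl S @ map swap_syl T)"
    using assms(2) valid_nf_swap[of n m N "(i, j, S @ T)"] by simp
  ultimately show ?thesis
    using lmult_a_append_syls[OF assms(1), of m N j i "map swap_syl S" "map swap_syl T" k] assms(3,4)
    by (simp add: lmult_b_def)
qed

definition pieces_a :: "nat \<Rightarrow> word set" where
  "pieces_a n = {[(False, False)], [(False, True)], gen_pow True n, gen_ipow True n}"

definition pieces_b :: "nat \<Rightarrow> word set" where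
  "pieces_b m = {[(True, False)], [(True, True)], gen_pow False m, gen_ipow False m}"

lemma act_word_append_syls_a:
  assumes "0 < m" "0 < n" "w \<in> words_over (pieces_a n)"
  shows "valid_nf m n N (i, j, S @ T) \<Longrightarrow> all_a_side S \<Longrightarrow> hd_not_a_side T \<Longrightarrow>
    act_word m n N w (i, j, S @ T) = append_syls (act_word m n N w (i, j, S)) T \<and>
    all_a_side (syls_of (act_word m n N w (i, j, S)))"
  using assms(3)
proof (induction arbitrary: i j S rule: words_over.induct)
  case (append p w)
  obtain i' j' S' where q: "act_word m n N w (i, j, S) = (i', j', S')"
    by (cases "act_word m n N w (i, j, S)")
  with append.IH[OF append.prems] have IH: "act_word m n N w (i, j, S @ T) = (i', j', S' @ T)" "all_a_side S'"
    by auto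
  have v: "valid_nf m n N (i', j', S' @ T)"
    using valid_nf_act_word[OF assms(1,2) append.prems(1), of w] IH by simp
  note d_pow = act_word_d_pow[OF assms(2) v, where k = 1]
    act_word_d_pow[OF assms(2) valid_nf_append_prefix[OF v], where k = 1]
  have "act_word m n N p (i', j', S' @ T) = append_syls (act_word m n N p (i', j', S')) T \<and>
        all_a_side (syls_of (act_word m n N p (i', j', S')))"
    using append.hyps lmult_a_append_syls[OF assms(1) v IH(2) append.prems(3)]
      d_pow IH(2)
    by (auto simp: pieces_a_def act_letter_def)
  then show ?case using IH q by simp
qed simp

lemma act_word_append_syls_b:
  assumes "0 < m" "0 < n" "w \<in> words_over (pieces_b m)"
  shows "valid_nf m n N (i, j, S @ T) \<Longrightarrow> all_b_side S \<Longrightarrow> hd_not_a_side (map swap_syl T) \<Longrightarrow>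
    act_word m n N w (i, j, S @ T) = append_syls (act_word m n N w (i, j, S)) T \<and>
    all_b_side (syls_of (act_word m n N w (i, j, S)))"
  using assms(3)
proof (induction arbitrary: i j S rule: words_over.induct)
  case (append p w)
  obtain i' j' S' where q: "act_word m n N w (i, j, S) = (i', j', S')"
    by (cases "act_word m n N w (i, j, S)")
  with append.IH[OF append.prems] have IH: "act_word m n N w (i, j, S @ T) = (i', j', S' @ T)" "all_b_side S'"
    by auto
  have v: "valid_nf m n N (i', j', S' @ T)"
    using valid_nf_act_word[OF assms(1,2) append.prems(1), of w] IH by simp
  note c_pow = act_word_c_pow[OF assms(1) v, where k = 1]
    act_word_c_pow[OF assms(1) valid_nf_append_prefix[OF v], where k = 1]
  have "act_word m n N p (i', j', S' @ T) = append_syls (act_word m n N p (i', j', S')) T \<and>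
        all_b_side (syls_of (act_word m n N p (i', j', S')))"
    using append.hyps lmult_b_append_syls[OF assms(2) v IH(2) append.prems(3)]
      c_pow IH(2)
    by (auto simp: pieces_b_def act_letter_def)
  then show ?case using IH q by simp
qed simp

context mn_presentation
begin

abbreviation subH :: "word set set" where "subH \<equiv> sub_H Rels m n"
abbreviation subA :: "word set set" where "subA \<equiv> sub_A Rels m n"
abbreviation subB :: "word set set" where "subB \<equiv> sub_B Rels m n"

lemma subH_subset_subA: "subH \<subseteq> subA" and subH_subset_subB: "subH \<subseteq> subB"
  unfolding sub_A_def sub_B_def by (auto intro: generate.incl)

lemma subgroup_subH: "subgroup subH Gr"
  unfolding sub_H_def by (rule grp.generate_is_subgroup) auto

lemma subgroup_subA: "subgroup subA Gr"
  unfolding sub_A_def using subgroup.subset[OF subgroup_subH]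
  by (intro grp.generate_is_subgroup) auto

lemma subgroup_subB: "subgroup subB Gr"
  unfolding sub_B_def using subgroup.subset[OF subgroup_subH]
  by (intro grp.generate_is_subgroup) auto

lemma subA_carrier: "subA \<subseteq> carrier Gr" and subB_carrier: "subB \<subseteq> carrier Gr"
  using subgroup_subA subgroup_subB by (auto dest: subgroup.subset)

lemma c_pow_in_subH: "ga [^]\<^bsub>Gr\<^esub> (int m * i) \<in> subH"
proof -
  have "ga [^]\<^bsub>Gr\<^esub> int m \<in> subH"
    unfolding sub_H_def by (rule generate.incl) (simp add: ga_def cls_letter_int_pow)
  from grp.subgroup_int_pow_closed[OF subgroup_subH this] show ?thesis
    by (simp add: grp.int_pow_pow)
qed

lemma d_pow_in_subH: "gb [^]\<^bsub>Gr\<^esub> (int n * j) \<in> subH"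
proof -
  have "gb [^]\<^bsub>Gr\<^esub> int n \<in> subH"
    unfolding sub_H_def by (rule generate.incl) (simp add: gb_def cls_letter_int_pow)
  from grp.subgroup_int_pow_closed[OF subgroup_subH this] show ?thesis
    by (simp add: grp.int_pow_pow)
qed

lemma ga_in_subA: "ga \<in> subA"
  unfolding sub_A_def ga_def by (rule generate.incl) (simp add: gen_pow_def)

lemma gb_in_subB: "gb \<in> subB"
  unfolding sub_B_def gb_def by (rule generate.incl) (simp add: gen_pow_def)

lemma eval_in_subH: "eval (i, j, []) \<in> subH"
  using c_pow_in_subH d_pow_in_subH subgroup.m_closed[OF subgroup_subH] subgroup.one_closed[OF subgroup_subH]
  by simp

lemma eval_in_subA: "all_a_side S \<Longrightarrow> eval (i, j, S) \<in> subA"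
proof -
  assume S: "all_a_side S"
  have "grp.eval_syl ga gb m n s \<in> subA" if "a_side s" for s
    using that grp.subgroup_int_pow_closed[OF subgroup_subA ga_in_subA] d_pow_in_subH subH_subset_subA
    by (cases s) auto
  then have "grp.eval_syls ga gb m n S \<in> subA"
    using S by (intro grp.eval_syls_in_subgroup[OF subgroup_subA]) (auto simp: all_a_side_def)
  then show ?thesis
    using c_pow_in_subH d_pow_in_subH subH_subset_subA
    by (auto intro!: subgroup.m_closed[OF subgroup_subA])
qed

lemma eval_in_subB: "all_b_side S \<Longrightarrow> eval (i, j, S) \<in> subB"
proof -
  assume S: "all_b_side S"
  have "grp.eval_syl ga gb m n s \<in> subB" if "\<not> a_side s" for s
    using that grp.subgroup_int_pow_closed[OF subgroup_subB gb_in_subB] c_pow_in_subH subH_subset_subB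
    by (cases s) auto
  then have "grp.eval_syls ga gb m n S \<in> subB"
    using S by (intro grp.eval_syls_in_subgroup[OF subgroup_subB]) (auto simp: all_b_side_def)
  then show ?thesis
    using c_pow_in_subH d_pow_in_subH subH_subset_subB
    by (auto intro!: subgroup.m_closed[OF subgroup_subB])
qed

lemma subH_subset_words_over:
  assumes "gen_pow False m \<in> words_over P" "gen_pow True n \<in> words_over P"
    and "\<And>p. p \<in> P \<Longrightarrow> inv_word p \<in> words_over P"
  shows "subH \<subseteq> cls ` words_over P"
  unfolding sub_H_def using assms by (intro generate_subset_words_over) auto

lemma subA_subset_words_over: "subA \<subseteq> cls ` words_over (pieces_a n)"
proof -
  have inv: "inv_word p \<in> words_over (pieces_a n)" if "p \<in> pieces_a n" for p
    using that by (auto simp: pieces_a_def inv_letter_def intro!: words_over_piece)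
  have "[(False, False)] \<in> words_over (pieces_a n)" "gen_pow True n \<in> words_over (pieces_a n)"
    by (simp_all add: pieces_a_def words_over_piece)
  moreover have "gen_pow False m \<in> words_over (pieces_a n)"
    unfolding gen_pow_def by (rule replicate_in_words_over) (simp add: pieces_a_def)
  ultimately have "[(False, False)] \<in> words_over (pieces_a n)" "subH \<subseteq> cls ` words_over (pieces_a n)"
    using subH_subset_words_over[OF _ _ inv] by auto
  then show ?thesis
    unfolding sub_A_def by (intro generate_subset_words_over[OF _ inv]) (auto simp: gen_pow_def)
qed

lemma subB_subset_words_over: "subB \<subseteq> cls ` words_over (pieces_b m)"
proof -
  have inv: "inv_word p \<in> words_over (pieces_b m)" if "p \<in> pieces_b m" for p
    using that by (auto simp: pieces_b_def inv_letter_def intro!: words_over_piece)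
  have "[(True, False)] \<in> words_over (pieces_b m)" "gen_pow False m \<in> words_over (pieces_b m)"
    by (simp_all add: pieces_b_def words_over_piece)
  moreover have "gen_pow True n \<in> words_over (pieces_b m)"
    unfolding gen_pow_def by (rule replicate_in_words_over) (simp add: pieces_b_def)
  ultimately have "[(True, False)] \<in> words_over (pieces_b m)" "subH \<subseteq> cls ` words_over (pieces_b m)"
    using subH_subset_words_over[OF _ _ inv] by auto
  then show ?thesis
    unfolding sub_B_def by (intro generate_subset_words_over[OF _ inv]) (auto simp: gen_pow_def)
qed

lemma all_a_side_normal_form: "x \<in> subA \<Longrightarrow> all_a_side (syls_of (normal_form x))"
  using subA_subset_words_over act_word_append_syls_a[OF m_pos n_pos, of _ N 0 0 "[]" "[]"]
  by (fastforce simp: normal_form_cls all_a_side_def hd_not_a_side_def)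

lemma all_b_side_normal_form: "x \<in> subB \<Longrightarrow> all_b_side (syls_of (normal_form x))"
  using subB_subset_words_over act_word_append_syls_b[OF m_pos n_pos, of _ N 0 0 "[]" "[]"]
  by (fastforce simp: normal_form_cls all_b_side_def hd_not_a_side_def)

lemma eval_syls_of_normal_form:
  "x \<in> carrier Gr \<Longrightarrow> x = eval (fst (normal_form x), fst (snd (normal_form x)), syls_of (normal_form x))"
  using eval_normal_form[of x] by (cases "normal_form x") auto

lemma subA_iff: "x \<in> carrier Gr \<Longrightarrow> x \<in> subA \<longleftrightarrow> all_a_side (syls_of (normal_form x))"
  by (metis all_a_side_normal_form eval_in_subA eval_syls_of_normal_form)

lemma subB_iff: "x \<in> carrier Gr \<Longrightarrow> x \<in> subB \<longleftrightarrow> all_b_side (syls_of (normal_form x))"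
  by (metis all_b_side_normal_form eval_in_subB eval_syls_of_normal_form)

lemma all_a_b_side_Nil: "all_a_side S \<Longrightarrow> all_b_side S \<Longrightarrow> S = []"
  by (cases S) (auto simp: all_a_side_def all_b_side_def)

lemma subH_iff: "x \<in> carrier Gr \<Longrightarrow> x \<in> subH \<longleftrightarrow> syls_of (normal_form x) = []"
  by (metis all_a_b_side_Nil all_a_side_normal_form all_b_side_normal_form eval_in_subH
      eval_syls_of_normal_form subH_subset_subA subH_subset_subB subsetD)

lemma subA_Int_subB: "x \<in> subA \<Longrightarrow> x \<in> subB \<Longrightarrow> x \<in> subH"
  using subA_carrier subH_iff all_a_b_side_Nil all_a_side_normal_form all_b_side_normal_form by blast

end

section \<open>Reduced forms and length\<close>

fun blocks :: "syl list \<Rightarrow> nat" where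
  "blocks [] = 0"
| "blocks [x] = 1"
| "blocks (x # y # S) = (if a_side x = a_side y then 0 else 1) + blocks (y # S)"

lemma blocks_pos: "S \<noteq> [] \<Longrightarrow> 1 \<le> blocks S"
  by (induction S rule: blocks.induct) auto

lemma blocks_le_1_iff: "blocks S \<le> 1 \<longleftrightarrow> all_a_side S \<or> all_b_side S"
proof (induction S rule: blocks.induct)
  case (3 x y S)
  then show ?case using blocks_pos[of "y # S"] by (auto simp: all_a_side_def all_b_side_def)
qed (auto simp: all_a_side_def all_b_side_def)

lemma blocks_uniform: "all_a_side S \<or> all_b_side S \<Longrightarrow> S \<noteq> [] \<Longrightarrow> blocks S = 1"
  using blocks_le_1_iff blocks_pos by (metis le_antisym)

lemma blocks_append:
  "S \<noteq> [] \<Longrightarrow> \<forall>s\<in>set S. a_side s = b \<Longrightarrow> T \<noteq> [] \<Longrightarrow> a_side (hd T) \<noteq> b \<Longrightarrow>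
   blocks (S @ T) = 1 + blocks T"
proof (induction S rule: blocks.induct)
  case (2 x) then show ?case by (cases T) auto
qed auto

lemma list_prod_simps [simp]:
  "list_prod G [] = \<one>\<^bsub>G\<^esub>" "list_prod G (y # ys) = y \<otimes>\<^bsub>G\<^esub> list_prod G ys"
  by (simp_all add: list_prod_def)

context mn_presentation
begin

definition alternating :: "word set list \<Rightarrow> bool" where
  "alternating ys \<longleftrightarrow> (\<forall>y\<in>set ys. y \<in> (subA \<union> subB) - subH) \<and>
     successively (\<lambda>y z. \<not> (y \<in> subA \<and> z \<in> subA) \<and> \<not> (y \<in> subB \<and> z \<in> subB)) ys"

lemma reduced_form_iff_alternating:
  "1 < length ys \<Longrightarrow> reduced_form Gr subA subB subH ys \<longleftrightarrow> alternating ys"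
  by (auto simp: reduced_form_def alternating_def successively_conv_nth)

lemma reduced_form_singleton: "reduced_form Gr subA subB subH [y] \<longleftrightarrow> y \<in> subA \<union> subB"
  by (simp add: reduced_form_def)

lemma list_prod_closed: "alternating ys \<Longrightarrow> list_prod Gr ys \<in> carrier Gr"
  using subA_carrier subB_carrier by (induction ys) (auto simp: alternating_def successively_Cons)

lemma mult_subH_notin:
  assumes "y \<in> carrier Gr" "y \<notin> subH" "h \<in> subH" shows "y \<otimes>\<^bsub>Gr\<^esub> h \<notin> subH"
proof
  assume "y \<otimes>\<^bsub>Gr\<^esub> h \<in> subH"
  then have "y \<otimes>\<^bsub>Gr\<^esub> h \<otimes>\<^bsub>Gr\<^esub> inv\<^bsub>Gr\<^esub> h \<in> subH"
    using assms(3) subgroup.m_closed[OF subgroup_subH] subgroup.m_inv_closed[OF subgroup_subH] by blast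
  then show False
    using assms subgroup.subset[OF subgroup_subH] by (auto simp: grp.m_assoc)
qed

text \<open>The \<open>H\<close>-part \<open>c\<^sup>i d\<^sup>j\<close> of the normal form of \<open>x\<close> is absorbed into the new block.\<close>

lemma normal_form_mult_subA:
  assumes "y \<in> subA" "y \<notin> subH" "x \<in> carrier Gr" "hd_not_a_side (syls_of (normal_form x))"
  shows "\<exists>S. syls_of (normal_form (y \<otimes>\<^bsub>Gr\<^esub> x)) = S @ syls_of (normal_form x) \<and>
             S \<noteq> [] \<and> all_a_side S"
proof -
  obtain i j T where nx: "normal_form x = (i, j, T)" by (cases "normal_form x")
  obtain w where w: "w \<in> words_over (pieces_a n)" "y = cls w"
    using assms(1) subA_subset_words_over by auto
  have v: "valid_nf m n N (i, j, [] @ T)" using valid_normal_form[OF assms(3)] nx by simp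
  then have v0: "valid_nf m n N (i, j, [])" by (rule valid_nf_append_prefix)
  obtain i' j' S where q: "act_word m n N w (i, j, []) = (i', j', S)"
    by (cases "act_word m n N w (i, j, [])")
  have "normal_form (y \<otimes>\<^bsub>Gr\<^esub> x) = (i', j', S @ T) \<and> all_a_side S"
    using act_word_append_syls_a[OF m_pos n_pos w(1) v] assms(3,4) nx q v
    by (simp add: w(2) normal_form_mult act_elem_cls all_a_side_def)
  moreover have "S \<noteq> []"
  proof -
    have "eval (i, j, []) \<in> subH" "normal_form (eval (i, j, [])) = (i, j, [])"
      using eval_in_subH normal_form_eval[OF v0] by auto
    moreover have "y \<otimes>\<^bsub>Gr\<^esub> eval (i, j, []) \<notin> subH"
      using mult_subH_notin assms(1,2) subA_carrier eval_in_subH by blast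
    ultimately show ?thesis
      using subH_iff q v0 by (simp add: w(2) normal_form_mult act_elem_cls)
  qed
  ultimately show ?thesis using nx by auto
qed

lemma normal_form_mult_subB:
  assumes "y \<in> subB" "y \<notin> subH" "x \<in> carrier Gr"
    and "hd_not_a_side (map swap_syl (syls_of (normal_form x)))"
  shows "\<exists>S. syls_of (normal_form (y \<otimes>\<^bsub>Gr\<^esub> x)) = S @ syls_of (normal_form x) \<and>
             S \<noteq> [] \<and> all_b_side S"
proof -
  obtain i j T where nx: "normal_form x = (i, j, T)" by (cases "normal_form x")
  obtain w where w: "w \<in> words_over (pieces_b m)" "y = cls w"
    using assms(1) subB_subset_words_over by auto
  have v: "valid_nf m n N (i, j, [] @ T)" using valid_normal_form[OF assms(3)] nx by simp
  then have v0: "valid_nf m n N (i, j, [])" by (rule valid_nf_append_prefix)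
  obtain i' j' S where q: "act_word m n N w (i, j, []) = (i', j', S)"
    by (cases "act_word m n N w (i, j, [])")
  have "normal_form (y \<otimes>\<^bsub>Gr\<^esub> x) = (i', j', S @ T) \<and> all_b_side S"
    using act_word_append_syls_b[OF m_pos n_pos w(1) v] assms(3,4) nx q v
    by (simp add: w(2) normal_form_mult act_elem_cls all_b_side_def)
  moreover have "S \<noteq> []"
  proof -
    have "eval (i, j, []) \<in> subH" "normal_form (eval (i, j, [])) = (i, j, [])"
      using eval_in_subH normal_form_eval[OF v0] by auto
    moreover have "y \<otimes>\<^bsub>Gr\<^esub> eval (i, j, []) \<notin> subH"
      using mult_subH_notin assms(1,2) subB_carrier eval_in_subH by blast
    ultimately show ?thesis
      using subH_iff q v0 by (simp add: w(2) normal_form_mult act_elem_cls)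
  qed
  ultimately show ?thesis using nx by auto
qed

end

lemma lead_not_cd_side_switch: "syl_adj x y \<Longrightarrow> a_side x \<noteq> a_side y \<Longrightarrow> lead_not_cd (y # Z)"
  by (cases x; cases y) auto

lemma valid_nf_append_suffix:
  assumes "valid_nf m n N (i, j, T @ U)" "T \<noteq> []" "U \<noteq> []" "a_side (last T) \<noteq> a_side (hd U)"
  shows "valid_nf m n N (0, 0, U)"
proof -
  have "syl_adj (last T) (hd U)" "valid_syls m n N U"
    using assms(1-3) by (auto simp: valid_syls_def successively_append_iff)
  then show ?thesis using lead_not_cd_side_switch[OF _ assms(4), of "tl U"] assms(3) by simp
qed

lemma split_first_run:
  assumes "S \<noteq> []"
  obtains T U where "S = T @ U" "T \<noteq> []" "\<forall>s\<in>set T. a_side s = a_side (hd S)"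
    "U \<noteq> [] \<Longrightarrow> a_side (hd U) \<noteq> a_side (hd S)"
proof -
  let ?P = "\<lambda>s. a_side s = a_side (hd S)"
  show ?thesis
  proof (rule that[of "takeWhile ?P S" "dropWhile ?P S"])
    show "takeWhile ?P S \<noteq> []" using assms by (cases S) auto
    show "\<forall>s\<in>set (takeWhile ?P S). ?P s" by (auto dest: set_takeWhileD)
    show "dropWhile ?P S \<noteq> [] \<Longrightarrow> a_side (hd (dropWhile ?P S)) \<noteq> a_side (hd S)"
      using hd_dropWhile by blast
  qed simp
qed

context mn_presentation
begin

lemma alternating_Cons:
  "alternating (y # ys) \<longleftrightarrow> y \<in> (subA \<union> subB) - subH \<and> alternating ys \<and>
     (ys \<noteq> [] \<longrightarrow> \<not> (y \<in> subA \<and> hd ys \<in> subA) \<and> \<not> (y \<in> subB \<and> hd ys \<in> subB))"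
  by (auto simp: alternating_def successively_Cons)

lemma normal_form_factor:
  assumes "y \<in> (subA \<union> subB) - subH"
  shows "syls_of (normal_form y) \<noteq> [] \<and> blocks (syls_of (normal_form y)) = 1 \<and>
         (a_side (hd (syls_of (normal_form y))) \<longleftrightarrow> y \<in> subA)"
proof -
  have "y \<in> carrier Gr" using assms subA_carrier subB_carrier by auto
  then show ?thesis
    using assms subH_iff[of y] subA_iff[of y] subB_iff[of y] blocks_uniform
    by (cases "syls_of (normal_form y)") (auto simp: all_a_side_def all_b_side_def)
qed

lemma blocks_normal_form_mult:
  assumes y: "y \<in> (subA \<union> subB) - subH" and x: "x \<in> carrier Gr" "syls_of (normal_form x) \<noteq> []"
    and side: "y \<in> subA \<longleftrightarrow> \<not> a_side (hd (syls_of (normal_form x)))"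
  shows "syls_of (normal_form (y \<otimes>\<^bsub>Gr\<^esub> x)) \<noteq> [] \<and>
         blocks (syls_of (normal_form (y \<otimes>\<^bsub>Gr\<^esub> x))) = 1 + blocks (syls_of (normal_form x)) \<and>
         (a_side (hd (syls_of (normal_form (y \<otimes>\<^bsub>Gr\<^esub> x)))) \<longleftrightarrow> y \<in> subA)"
proof (cases "y \<in> subA")
  case True
  then obtain S where S: "syls_of (normal_form (y \<otimes>\<^bsub>Gr\<^esub> x)) = S @ syls_of (normal_form x)"
    "S \<noteq> []" "all_a_side S"
    using normal_form_mult_subA[OF _ _ x(1)] y x(2) side
    by (cases "syls_of (normal_form x)") (auto simp: hd_not_a_side_def)
  then show ?thesis
    using blocks_append[OF S(2) _ x(2), of True] side True by (auto simp: all_a_side_def)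
next
  case False
  then obtain S where S: "syls_of (normal_form (y \<otimes>\<^bsub>Gr\<^esub> x)) = S @ syls_of (normal_form x)"
    "S \<noteq> []" "all_b_side S"
    using normal_form_mult_subB[OF _ _ x(1)] y x(2) side
    by (cases "syls_of (normal_form x)") (auto simp: hd_not_a_side_def)
  then show ?thesis
    using blocks_append[OF S(2) _ x(2), of False] side False by (auto simp: all_b_side_def)
qed

lemma blocks_normal_form_list_prod:
  assumes "alternating ys" "ys \<noteq> []"
  shows "syls_of (normal_form (list_prod Gr ys)) \<noteq> [] \<and>
         blocks (syls_of (normal_form (list_prod Gr ys))) = length ys \<and>
         (a_side (hd (syls_of (normal_form (list_prod Gr ys)))) \<longleftrightarrow> hd ys \<in> subA)"
  using assms
proof (induction ys)
  case (Cons y ys)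
  let ?T = "syls_of (normal_form (list_prod Gr ys))"
  have y: "y \<in> (subA \<union> subB) - subH" and ys: "alternating ys"
    and sw: "ys \<noteq> [] \<Longrightarrow> \<not> (y \<in> subA \<and> hd ys \<in> subA) \<and> \<not> (y \<in> subB \<and> hd ys \<in> subB)"
    using Cons.prems by (auto simp: alternating_Cons)
  show ?case
  proof (cases "ys = []")
    case True
    have "y \<in> carrier Gr" using y subA_carrier subB_carrier by auto
    then show ?thesis using normal_form_factor[OF y] True by simp
  next
    case False
    with Cons.IH ys have IH: "?T \<noteq> []" "blocks ?T = length ys" "a_side (hd ?T) \<longleftrightarrow> hd ys \<in> subA"
      by auto
    have "hd ys \<in> subA \<union> subB" using ys False by (cases ys) (auto simp: alternating_Cons)
    then have "y \<in> subA \<longleftrightarrow> \<not> a_side (hd ?T)" using y sw False IH(3) by blast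
    then show ?thesis
      using blocks_normal_form_mult[OF y list_prod_closed[OF ys] IH(1)] IH(2) by simp
  qed
qed simp

lemma eval_uniform_block:
  assumes "valid_nf m n N (i, j, T)" "T \<noteq> []" "\<forall>s\<in>set T. a_side s = b"
  shows "eval (i, j, T) \<in> (subA \<union> subB) - subH \<and> (eval (i, j, T) \<in> subA \<longleftrightarrow> b)"
proof -
  have nf: "normal_form (eval (i, j, T)) = (i, j, T)" by (rule normal_form_eval[OF assms(1)])
  have "\<not> all_a_side T" if "\<not> b" using that assms(2,3) by (cases T) (auto simp: all_a_side_def)
  then show ?thesis
    using assms(2,3) nf subH_iff subA_iff eval_in_subA eval_in_subB
    by (cases b) (auto simp: all_a_side_def all_b_side_def)
qed

lemma alternating_factorization:
  "valid_nf m n N (i, j, S) \<Longrightarrow> S \<noteq> [] \<Longrightarrow>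
   \<exists>ys. alternating ys \<and> ys \<noteq> [] \<and> length ys = blocks S \<and> list_prod Gr ys = eval (i, j, S) \<and>
        (hd ys \<in> subA \<longleftrightarrow> a_side (hd S))"
proof (induction "length S" arbitrary: i j S rule: less_induct)
  case less
  define b where "b = a_side (hd S)"
  obtain T U where SU: "S = T @ U" and T: "T \<noteq> []" "\<forall>s\<in>set T. a_side s = b"
    and U: "U \<noteq> [] \<Longrightarrow> a_side (hd U) \<noteq> b"
    using split_first_run[OF less.prems(2), folded b_def] by blast
  have vT: "valid_nf m n N (i, j, T)" using less.prems(1) SU valid_nf_append_prefix by metis
  define y where "y = eval (i, j, T)"
  have y: "y \<in> (subA \<union> subB) - subH" "y \<in> subA \<longleftrightarrow> b"
    using eval_uniform_block[OF vT T] by (auto simp: y_def)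
  show ?case
  proof (cases "U = []")
    case True
    then have "blocks S = 1" "list_prod Gr [y] = eval (i, j, S)"
      using blocks_uniform[of S] T SU by (cases b; auto simp: all_a_side_def all_b_side_def y_def)+
    then show ?thesis using y by (intro exI[of _ "[y]"]) (auto simp: alternating_def b_def)
  next
    case False
    have "a_side (last T) \<noteq> a_side (hd U)" using T U[OF False] by simp
    then have vU: "valid_nf m n N (0, 0, U)"
      using valid_nf_append_suffix less.prems(1) SU T(1) False by metis
    obtain ys where ys: "alternating ys" "ys \<noteq> []" "length ys = blocks U"
      "list_prod Gr ys = eval (0, 0, U)" "hd ys \<in> subA \<longleftrightarrow> a_side (hd U)"
      using less.hyps[OF _ vU False] SU T(1) by auto
    have "hd ys \<in> (subA \<union> subB) - subH" using ys(1,2) by (cases ys) (auto simp: alternating_Cons)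
    then have "alternating (y # ys)"
      using y ys U[OF False] subA_Int_subB by (auto simp: alternating_Cons)
    moreover have "blocks S = 1 + blocks U" unfolding SU by (rule blocks_append[OF T(1,2) False U[OF False]])
    moreover have "list_prod Gr (y # ys) = eval (i, j, S)"
      using ys(4) SU by (simp add: y_def grp.eval_syls_append grp.m_assoc)
    ultimately show ?thesis using ys y SU T(1) by (intro exI[of _ "y # ys"]) (auto simp: b_def)
  qed
qed

lemma reduced_form_length:
  assumes "x \<in> carrier Gr" "reduced_form Gr subA subB subH ys" "list_prod Gr ys = x"
  shows "length ys = max 1 (blocks (syls_of (normal_form x)))"
proof (cases "1 < length ys")
  case True
  then have "alternating ys" "ys \<noteq> []" using assms(2) reduced_form_iff_alternating by auto
  then show ?thesis using blocks_normal_form_list_prod assms(3) True by auto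
next
  case False
  then obtain y where ys: "ys = [y]" using assms(2) by (cases ys) (auto simp: reduced_form_def)
  then have "x = y" "x \<in> subA \<union> subB"
    using assms reduced_form_singleton subA_carrier subB_carrier by auto
  then show ?thesis using ys assms(1) subA_iff subB_iff blocks_le_1_iff by auto
qed

lemma reduced_form_exists:
  assumes "x \<in> carrier Gr"
  shows "\<exists>ys. reduced_form Gr subA subB subH ys \<and>
           length ys = max 1 (blocks (syls_of (normal_form x))) \<and> list_prod Gr ys = x"
proof (cases "blocks (syls_of (normal_form x)) \<le> 1")
  case True
  then have "x \<in> subA \<union> subB" using assms subA_iff subB_iff blocks_le_1_iff by blast
  then show ?thesis using True assms reduced_form_singleton by (intro exI[of _ "[x]"]) auto
next
  case False
  obtain i j S where nx: "normal_form x = (i, j, S)" by (cases "normal_form x")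
  then have "valid_nf m n N (i, j, S)" "S \<noteq> []" "eval (i, j, S) = x"
    using valid_normal_form[OF assms] False eval_normal_form[OF assms] by auto
  then obtain ys where "alternating ys" "length ys = blocks S" "list_prod Gr ys = x"
    using alternating_factorization[of i j S] by auto
  then show ?thesis using False nx reduced_form_iff_alternating[of ys] by (intro exI[of _ ys]) auto
qed

theorem amal_length_eq_blocks:
  assumes "x \<in> carrier Gr"
  shows "amal_length Gr subA subB subH x = max 1 (blocks (syls_of (normal_form x)))"
  unfolding amal_length_def
  using reduced_form_exists[OF assms] reduced_form_length[OF assms]
  by (intro Least_equality) auto

end

section \<open>Reduction modulo \<open>t\<close>\<close>

fun reduce_syl :: "nat \<Rightarrow> syl \<Rightarrow> syl" where
  "reduce_syl t (SC e) = SC (exp_mod t e)"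
| "reduce_syl t (SD e) = SD (exp_mod t e)"
| "reduce_syl t s = s"

fun reduce_nf :: "nat \<Rightarrow> nform \<Rightarrow> nform" where
  "reduce_nf t (i, j, S) = (exp_mod t i, exp_mod t j, map (reduce_syl t) S)"

fun syl_exp :: "syl \<Rightarrow> nat" where
  "syl_exp (SC e) = nat \<bar>e\<bar>" | "syl_exp (SD e) = nat \<bar>e\<bar>" | "syl_exp _ = 0"

lemma a_side_reduce_syl [simp]: "a_side (reduce_syl t s) = a_side s"
  by (cases s) auto

lemma blocks_reduce_syl [simp]: "blocks (map (reduce_syl t) S) = blocks S"
  by (induction S rule: blocks.induct) auto

lemma exp_mod_nonzero:
  assumes "e \<noteq> 0" "nat \<bar>e\<bar> < t" shows "exp_mod t e \<noteq> 0"
proof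
  assume "exp_mod t e = 0"
  then have "int t dvd e" by (simp add: exp_mod_def dvd_eq_mod_eq_0)
  then have "\<bar>int t\<bar> \<le> \<bar>e\<bar>" using dvd_imp_le_int[OF assms(1)] by blast
  then show False using assms(2) by linarith
qed

lemma valid_nf_reduce_nf:
  assumes "valid_nf m n 0 (i, j, S)" "\<forall>s\<in>set S. syl_exp s < t"
  shows "valid_nf m n t (reduce_nf t (i, j, S))"
proof -
  have "valid_syl m n t (reduce_syl t s)" if "s \<in> set S" for s
  proof -
    have "valid_syl m n 0 s" "syl_exp s < t" using assms that by (auto simp: valid_syls_def)
    then show ?thesis by (cases s) (simp_all add: exp_mod_nonzero)
  qed
  moreover have "syl_adj (reduce_syl t x) (reduce_syl t y) = syl_adj x y" for x y
    by (cases x; cases y) auto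
  moreover have "lead_not_cd (map (reduce_syl t) S) = lead_not_cd S"
    by (cases S rule: lead_not_cd.cases) auto
  ultimately show ?thesis using assms by (simp add: valid_syls_def successively_map)
qed

lemma (in group) eval_nf_reduce_nf:
  assumes "g1 \<in> carrier G" "g2 \<in> carrier G"
    and "g1 [^] (int M1 * int N) = \<one>" "g2 [^] (int M2 * int N) = \<one>"
  shows "eval_nf g1 g2 M1 M2 (reduce_nf N p) = eval_nf g1 g2 M1 M2 p"
proof -
  have "eval_syl g1 g2 M1 M2 (reduce_syl N s) = eval_syl g1 g2 M1 M2 s" for s
    using int_pow_exp_mod[OF assms(1,3)] int_pow_exp_mod[OF assms(2,4)] by (cases s) auto
  then have "eval_syls g1 g2 M1 M2 (map (reduce_syl N) S) = eval_syls g1 g2 M1 M2 S" for S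
    by (induction S) auto
  then show ?thesis
    using int_pow_exp_mod[OF assms(1,3)] int_pow_exp_mod[OF assms(2,4)] by (cases p) auto
qed

lemma hom_eval_nf:
  assumes "group_hom G H h" "g1 \<in> carrier G" "g2 \<in> carrier G"
  shows "h (group.eval_nf G g1 g2 M1 M2 p) = group.eval_nf H (h g1) (h g2) M1 M2 p"
proof -
  interpret group_hom G H h by (rule assms(1))
  have "h (G.eval_syl g1 g2 M1 M2 s) = H.eval_syl (h g1) (h g2) M1 M2 s" for s
    using assms(2,3) by (cases s) (auto simp: hom_int_pow)
  then have "h (G.eval_syls g1 g2 M1 M2 S) = H.eval_syls (h g1) (h g2) M1 M2 S" for S
    using assms(2,3) by (induction S) auto
  then show ?thesis using assms(2,3) by (cases p) (auto simp: hom_int_pow)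
qed

lemma rho_word_cls: "rho m n t (word_cls (rels_G m n) w) = word_cls (rels_Gt m n t) w"
proof (intro equalityI subsetI)
  fix v assume "v \<in> rho m n t (word_cls (rels_G m n) w)"
  then obtain x where x: "word_eqv (rels_G m n) x w" and v: "word_eqv (rels_Gt m n t) v x"
    by (auto simp: rho_def word_cls_def)
  have "rels_G m n \<subseteq> rels_Gt m n t" by (auto simp: rels_Gt_def)
  from word_eqv.trans[OF v word_eqv_mono[OF x this]]
  show "v \<in> word_cls (rels_Gt m n t) w" by (simp add: word_cls_def)
next
  fix v assume "v \<in> word_cls (rels_Gt m n t) w"
  then show "v \<in> rho m n t (word_cls (rels_G m n) w)"
    by (auto simp: rho_def word_cls_def intro: word_eqv.refl)
qed

lemma group_hom_rho: "group_hom (G_mn m n) (G_mnt m n t) (rho m n t)"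
proof -
  have "rho m n t \<in> hom (G_mn m n) (G_mnt m n t)"
    by (rule homI)
       (auto simp: G_mn_def G_mnt_def pres_group_carrier rho_word_cls pres_group_mult)
  then show ?thesis
    by (simp add: group_hom_def group_hom_axioms_def G_mn_def G_mnt_def group_pres_group)
qed

lemma normal_form_rho:
  assumes "mn_presentation m n" "0 < t" "g \<in> carrier (G_mn m n)"
    and "mn_presentation.normal_form m n 0 g = (i, j, S)" "\<forall>s\<in>set S. syl_exp s < t"
  shows "mn_presentation.normal_form m n t (rho m n t g) = reduce_nf t (i, j, S)"
proof -
  interpret G0: mn_presentation m n 0 by (rule assms(1))
  interpret Gt: mn_presentation m n t by (rule assms(1))
  have rels: "rels_G m n = rels_N m n 0" "rels_Gt m n t = rels_N m n t"
    using assms(2) by (simp_all add: rels_N_def)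
  have g: "g \<in> carrier G0.Gr" using assms(3) by (simp add: G_mn_def rels)
  have hom: "group_hom G0.Gr Gt.Gr (rho m n t)"
    using group_hom_rho[of m n t] by (simp add: G_mn_def G_mnt_def rels)
  have v: "valid_nf m n t (reduce_nf t (i, j, S))"
    using G0.valid_normal_form[OF g] assms(4,5) by (intro valid_nf_reduce_nf) auto
  have "rho m n t g = rho m n t (G0.eval (i, j, S))"
    using G0.eval_normal_form[OF g] assms(4) by simp
  also have "\<dots> = Gt.eval (i, j, S)"
  proof -
    have "rho m n t G0.ga = Gt.ga" "rho m n t G0.gb = Gt.gb"
      using rho_word_cls[of m n t] by (simp_all add: G0.ga_def G0.gb_def Gt.ga_def Gt.gb_def rels)
    then show ?thesis using hom_eval_nf[OF hom G0.ga_carrier G0.gb_carrier] by (simp only:)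
  qed
  also have "\<dots> = Gt.eval (reduce_nf t (i, j, S))"
    by (rule Gt.grp.eval_nf_reduce_nf[OF Gt.ga_carrier Gt.gb_carrier Gt.ga_pow_mN Gt.gb_pow_nN, symmetric])
  finally show ?thesis using Gt.normal_form_eval[OF v] by (simp only:)
qed

lemma amal_length_rho:
  assumes "mn_presentation m n" "0 < t" "g \<in> carrier (G_mn m n)"
    and "mn_presentation.normal_form m n 0 g = (i, j, S)" "\<forall>s\<in>set S. syl_exp s < t"
  shows "amal_length (G_mnt m n t) (sub_A (rels_Gt m n t) m n) (sub_B (rels_Gt m n t) m n)
           (sub_H (rels_Gt m n t) m n) (rho m n t g) =
         amal_length (G_mn m n) (sub_A (rels_G m n) m n) (sub_B (rels_G m n) m n)
           (sub_H (rels_G m n) m n) g"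
proof -
  interpret G0: mn_presentation m n 0 by (rule assms(1))
  interpret Gt: mn_presentation m n t by (rule assms(1))
  have rels: "rels_G m n = rels_N m n 0" "rels_Gt m n t = rels_N m n t"
    using assms(2) by (simp_all add: rels_N_def)
  have g: "g \<in> carrier G0.Gr" using assms(3) by (simp add: G_mn_def rels)
  have "rho m n t g \<in> carrier Gt.Gr"
    using group_hom.hom_closed[OF group_hom_rho[of m n t] assms(3)] by (simp add: G_mnt_def rels)
  then show ?thesis
    unfolding G_mn_def G_mnt_def rels
    using Gt.amal_length_eq_blocks G0.amal_length_eq_blocks[OF g] normal_form_rho[OF assms] assms(4)
    by simp
qed

theorem proposition2p5:
  fixes m n :: nat and g :: "word set"
  assumes "m > 1" and "n > 1"
    and "g \<in> carrier (G_mn m n)"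
  shows "\<exists>t0::nat. t0 > 1 \<and>
           (\<forall>t::nat. t > 0 \<and> t0 dvd t \<longrightarrow>
              amal_length (G_mnt m n t) (sub_A (rels_Gt m n t) m n) (sub_B (rels_Gt m n t) m n)
                 (sub_H (rels_Gt m n t) m n) (rho m n t g)
              = amal_length (G_mn m n) (sub_A (rels_G m n) m n) (sub_B (rels_G m n) m n)
                 (sub_H (rels_G m n) m n) g)"
proof -
  have mn: "mn_presentation m n" using assms(1,2) by unfold_locales auto
  obtain i j S where nf: "mn_presentation.normal_form m n 0 g = (i, j, S)"
    by (cases "mn_presentation.normal_form m n 0 g")
  define t0 where "t0 = sum_list (map syl_exp S) + 2"
  have "syl_exp s < t" if "s \<in> set S" "0 < t" "t0 dvd t" for s t
  proof -
    have "syl_exp s \<le> sum_list (map syl_exp S)" using that(1) by (induction S) auto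
    then show ?thesis using dvd_imp_le[OF that(3,2)] by (simp add: t0_def)
  qed
  then show ?thesis
    using amal_length_rho[OF mn _ assms(3) nf] by (intro exI[of _ t0]) (auto simp: t0_def)
qed

end
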